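(* Let $\mathcal P(\boldsymbol\alpha,\boldsymbol\ell)$ and $\mathcal P'(\boldsymbol\alpha,\boldsymbol\ell')$ be two curvilinear $n$-gons with the same angles $\boldsymbol\alpha$ and side lengths satisfying $\ell_i\le\ell_i'$ for all $i=1,\dots,n$. Then their quasi-eigenvalues satisfy $\sigma_m\ge\sigma_m'$ for all $m\ge1$.
   Context: A curvilinear polygon $\mathcal P(\boldsymbol\alpha,\boldsymbol\ell)$: bounded simply connected planar domain bounded by $n$ smooth arcs $I_j$ of lengths $\ell_j>0$, vertices $V_1,\dots,V_n$ clockwise (cyclic indices), $I_j$ from $V_{j-1}$ to $V_j$, interior angle $\alpha_j\in(0,\pi)$ at $V_j$. $\mathcal E=\{\pi/(2k):k\in\mathbb N\}$, $\mathcal O(\pi/(2k))=(-1)^k$. For $\alpha\notin\mathcal E$, $\mathtt A(\alpha)=\begin{pmatrix}\csc\frac{\pi^2}{2\alpha}&-i\cot\frac{\pi^2}{2\alpha}\\ i\cot\frac{\pi^2}{2\alpha}&\csc\frac{\pi^2}{2\alpha}\end{pmatrix}$, $\mathtt B(\ell,\sigma)=\operatorname{diag}(e^{i\ell\sigma},e^{-i\ell\sigma})$. Quasi-eigenvalues $\sigma_1\le\sigma_2\le\dots$ (with multiplicity): if no angle is exceptional, $\sigma\ge0$ is one iff $1$ is an eigenvalue of $\mathtt T(\sigma)=\mathtt A(\alpha_n)\mathtt B(\ell_n,\sigma)\cdots\mathtt A(\alpha_1)\mathtt B(\ell_1,\sigma)$, with multiplicity the geometric multiplicity for $\sigma>0$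 and $1$ for $\sigma=0$. Otherwise, with exceptional vertices $V_{E_1},\dots,V_{E_K}$, $1\le E_1<\dots<E_K=n$, $E_0:=E_K$, let $\mathtt U_\kappa(\sigma)=\mathtt B(\ell_{E_\kappa},\sigma)\mathtt A(\alpha_{E_\kappa-1})\cdots\mathtt A(\alpha_{E_{\kappa-1}+1})\mathtt B(\ell_{E_{\kappa-1}+1},\sigma)$ (indices mod $n$), $\mathbf X_{\rm even}=\frac1{\sqrt2}(e^{-i\pi/4},e^{i\pi/4})^T$, $\mathbf X_{\rm odd}=\frac1{\sqrt2}(e^{i\pi/4},e^{-i\pi/4})^T$, $\mathbf X(\alpha)=\mathbf X_{\rm even}$ if $\mathcal O(\alpha)=1$ else $\mathbf X_{\rm odd}$, $u\cdot v=u_1\bar v_1+u_2\bar v_2$; $\sigma\ge0$ is a quasi-eigenvalue iff $\mathtt U_\kappa(\sigma)\mathbf X(\alpha_{E_{\kappa-1}})\cdot\mathbf X(\alpha_{E_\kappa})=0$ for some $\kappa$, multiplicity of $\sigma>0$ the number of such $\kappa$, multiplicity of $0$ half the number of $\kappa$ with $\mathcal O(\alpha_{E_{\kappa-1}})\ne\mathcal O(\alpha_{E_\kappa})$. *)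

theory Defs
  imports "HOL-Analysis.Analysis"
begin

type_synonym cmat2 = "complex^2^2"
type_synonym cvec2 = "complex^2"

definition mat2 :: "complex \<Rightarrow> complex \<Rightarrow> complex \<Rightarrow> complex \<Rightarrow> cmat2" where
  "mat2 a b c d = (\<chi> i j. if i = 1 then (if j = 1 then a else b) else (if j = 1 then c else d))"

definition vec2 :: "complex \<Rightarrow> complex \<Rightarrow> cvec2" where
  "vec2 a b = (\<chi> i. if i = 1 then a else b)"

definition herm :: "cvec2 \<Rightarrow> cvec2 \<Rightarrow> complex" where
  "herm u v = (\<Sum>i\<in>UNIV. u $ i * cnj (v $ i))"

definition exceptional :: "real \<Rightarrow> bool" where
  "exceptional a \<longleftrightarrow> (\<exists>k::nat. k \<ge> 1 \<and> a = pi / (2 * real k))"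

text \<open>Parity O(pi/(2k)) = (-1)^k (only meaningful on exceptional angles).\<close>
definition parityO :: "real \<Rightarrow> int" where
  "parityO a = (-1) ^ (THE k::nat. k \<ge> 1 \<and> a = pi / (2 * real k))"

definition matA :: "real \<Rightarrow> cmat2" where
  "matA a = (let t = pi ^ 2 / (2 * a) in
     mat2 (complex_of_real (1 / sin t)) (- \<i> * complex_of_real (cot t))
          (\<i> * complex_of_real (cot t)) (complex_of_real (1 / sin t)))"

definition matB :: "real \<Rightarrow> real \<Rightarrow> cmat2" where
  "matB l s = mat2 (cis (l * s)) 0 0 (cis (- (l * s)))"

definition Xeven :: cvec2 where
  "Xeven = vec2 (complex_of_real (1 / sqrt 2) * cis (- pi / 4)) (complex_of_real (1 / sqrt 2) * cis (pi / 4))"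

definition Xodd :: cvec2 where
  "Xodd = vec2 (complex_of_real (1 / sqrt 2) * cis (pi / 4)) (complex_of_real (1 / sqrt 2) * cis (- pi / 4))"

definition Xvec :: "real \<Rightarrow> cvec2" where
  "Xvec a = (if parityO a = 1 then Xeven else Xodd)"

definition cyc :: "nat \<Rightarrow> int \<Rightarrow> nat" where
  "cyc n i = nat ((i - 1) mod int n) + 1"

fun prodT :: "(nat \<Rightarrow> real) \<Rightarrow> (nat \<Rightarrow> real) \<Rightarrow> real \<Rightarrow> nat \<Rightarrow> cmat2" where
  "prodT alpha l s 0 = mat 1"
| "prodT alpha l s (Suc j) = matA (alpha (Suc j)) ** matB (l (Suc j)) s ** prodT alpha l s j"

definition matT :: "nat \<Rightarrow> (nat \<Rightarrow> real) \<Rightarrow> (nat \<Rightarrow> real) \<Rightarrow> real \<Rightarrow> cmat2" where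
  "matT n alpha l s = prodT alpha l s n"

definition geom_mult1 :: "cmat2 \<Rightarrow> nat" where
  "geom_mult1 M = vec.dim {v :: cvec2. M *v v = v}"

text \<open>For an exceptional vertex e, prev_dist is the cyclic distance d (1 \<le> d \<le> n)
  back to the previous exceptional vertex  cyc n (e - d)  (equal to e itself if there is only one).\<close>
definition prev_dist :: "nat \<Rightarrow> (nat \<Rightarrow> real) \<Rightarrow> nat \<Rightarrow> nat" where
  "prev_dist n alpha e = (LEAST d. d \<ge> 1 \<and> exceptional (alpha (cyc n (int e - int d))))"

definition prev_exc :: "nat \<Rightarrow> (nat \<Rightarrow> real) \<Rightarrow> nat \<Rightarrow> nat" where
  "prev_exc n alpha e = cyc n (int e - int (prev_dist n alpha e))"

fun prodW :: "nat \<Rightarrow> (nat \<Rightarrow> real) \<Rightarrow> (nat \<Rightarrow> real) \<Rightarrow> real \<Rightarrow> nat \<Rightarrow> nat \<Rightarrow> cmat2" where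
  "prodW n alpha l s e 0 = mat 1"
| "prodW n alpha l s e (Suc k) =
     prodW n alpha l s e k ** matA (alpha (cyc n (int e - int (Suc k))))
       ** matB (l (cyc n (int e - int (Suc k)))) s"

text \<open>U(s) = B(l_e) A(alpha_{e-1}) ... A(alpha_{p+1}) B(l_{p+1}), p the previous exceptional vertex.\<close>
definition matU :: "nat \<Rightarrow> (nat \<Rightarrow> real) \<Rightarrow> (nat \<Rightarrow> real) \<Rightarrow> nat \<Rightarrow> real \<Rightarrow> cmat2" where
  "matU n alpha l e s = matB (l e) s ** prodW n alpha l s e (prev_dist n alpha e - 1)"

definition exc_vertices :: "nat \<Rightarrow> (nat \<Rightarrow> real) \<Rightarrow> nat set" where
  "exc_vertices n alpha = {e \<in> {1..n}. exceptional (alpha e)}"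

definition exc_cond :: "nat \<Rightarrow> (nat \<Rightarrow> real) \<Rightarrow> (nat \<Rightarrow> real) \<Rightarrow> nat \<Rightarrow> real \<Rightarrow> bool" where
  "exc_cond n alpha l e s \<longleftrightarrow>
     herm (matU n alpha l e s *v Xvec (alpha (prev_exc n alpha e))) (Xvec (alpha e)) = 0"

definition qe_mult :: "nat \<Rightarrow> (nat \<Rightarrow> real) \<Rightarrow> (nat \<Rightarrow> real) \<Rightarrow> real \<Rightarrow> nat" where
  "qe_mult n alpha l s =
    (if s < 0 then 0
     else if exc_vertices n alpha = {} then
       (if geom_mult1 (matT n alpha l s) = 0 then 0
        else if s = 0 then 1 else geom_mult1 (matT n alpha l s))
     else if s > 0 then card {e \<in> exc_vertices n alpha. exc_cond n alpha l e s}
     else (if (\<exists>e \<in> exc_vertices n alpha. exc_cond n alpha l e 0)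
           then card {e \<in> exc_vertices n alpha.
                        parityO (alpha (prev_exc n alpha e)) \<noteq> parityO (alpha e)} div 2
           else 0))"

definition qe_count :: "nat \<Rightarrow> (nat \<Rightarrow> real) \<Rightarrow> (nat \<Rightarrow> real) \<Rightarrow> real \<Rightarrow> nat" where
  "qe_count n alpha l s = (\<Sum>t \<in> {t. 0 \<le> t \<and> t \<le> s \<and> qe_mult n alpha l t > 0}. qe_mult n alpha l t)"

text \<open>The m-th quasi-eigenvalue sigma_m (m \<ge> 1) in the non-decreasing enumeration with multiplicity.\<close>
definition qe :: "nat \<Rightarrow> (nat \<Rightarrow> real) \<Rightarrow> (nat \<Rightarrow> real) \<Rightarrow> nat \<Rightarrow> real" where
  "qe n alpha l m = Inf {s. m \<le> qe_count n alpha l s}"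

end

theory Submission
  imports Defs
begin

text \<open>The side matrices and the matrices of non-exceptional vertices lie in SU(1,1), which acts on
  the circle of vectors \<open>(e\<^sup>i\<^sup>x, e\<^sup>-\<^sup>i\<^sup>x)\<close>. Hence every transfer matrix has a continuous lift of its
  circle map; the lift increases with the angle, strictly with \<open>\<sigma>\<close> when the sides are positive,
  and it can only grow when a side is lengthened. Without exceptional angles, the multiplicity of
  the eigenvalue 1 of \<open>T(\<sigma>)\<close> counts which of the two extreme displacements of the lift lie
  in \<open>2\<pi>\<int>\<close>; at an exceptional vertex, \<open>U\<^sub>\<kappa>(\<sigma>) X \<cdot> X = 0\<close> says that the lifted angle of \<open>X\<close> lies
  on a shifted lattice \<open>\<pi>\<int>\<close>. Either way the number of quasi-eigenvalues in \<open>[0, \<sigma>]\<close> is its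
  value at 0 plus a number of lattice crossings of increasing functions of \<open>\<sigma>\<close>, which is the
  same at \<open>\<sigma> = 0\<close> for both polygons and grows with the sides. So the counting function of the
  longer polygon is larger, and its \<open>m\<close>-th quasi-eigenvalue, the first point where the counting
  function reaches \<open>m\<close>, is smaller.\<close>

section \<open>SU(1,1) and the action on the circle\<close>

lemma mat2_mult:
  "mat2 a b c d ** mat2 a' b' c' d' = mat2 (a*a' + b*c') (a*b' + b*d') (c*a' + d*c') (c*b' + d*d')"
  by (simp add: vec_eq_iff forall_2 sum_2 matrix_matrix_mult_def mat2_def)

lemma mat2_vec2: "mat2 a b c d *v vec2 x y = vec2 (a*x + b*y) (c*x + d*y)"
  by (simp add: vec_eq_iff forall_2 sum_2 matrix_vector_mult_def mat2_def vec2_def)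

lemma mat_1_eq_mat2: "(mat 1 :: cmat2) = mat2 1 0 0 1"
  by (simp add: vec_eq_iff forall_2 mat_def mat2_def)

lemma vec2_eq_iff: "vec2 a b = vec2 c d \<longleftrightarrow> a = c \<and> b = d"
  by (auto simp: vec_eq_iff forall_2 vec2_def)

lemma vec2_components: "(v::cvec2) = vec2 (v$1) (v$2)"
  by (simp add: vec_eq_iff forall_2 vec2_def)

lemma scale_vec2: "c *s vec2 u w = vec2 (c * u) (c * w)"
  by (simp add: vec_eq_iff forall_2 vec2_def)

lemma herm_vec2: "herm (vec2 a b) (vec2 c d) = a * cnj c + b * cnj d"
  by (simp add: herm_def sum_2 vec2_def)

lemma matB_0: "matB l 0 = mat 1"
  unfolding matB_def mat_1_eq_mat2 by simp

definition su11 :: "cmat2 \<Rightarrow> bool" where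
  "su11 M \<longleftrightarrow> (\<exists>a b. M = mat2 a b (cnj b) (cnj a) \<and> (cmod a)^2 - (cmod b)^2 = 1)"

lemma su11_mult:
  assumes "su11 M" "su11 N"
  shows "su11 (M ** N)"
proof -
  obtain a b where M: "M = mat2 a b (cnj b) (cnj a)" "(cmod a)^2 - (cmod b)^2 = 1"
    using assms(1) su11_def by auto
  obtain c d where N: "N = mat2 c d (cnj d) (cnj c)" "(cmod c)^2 - (cmod d)^2 = 1"
    using assms(2) su11_def by auto
  have MN: "M ** N = mat2 (a*c + b*cnj d) (a*d + b*cnj c) (cnj (a*d + b*cnj c)) (cnj (a*c + b*cnj d))"
    by (simp add: M N mat2_mult algebra_simps)
  have norm_sq: "\<And>z::complex. (cmod z)^2 = Re (z * cnj z)"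
    by (simp add: complex_mult_cnj cmod_def power2_eq_square)
  have "(cmod (a*c + b*cnj d))^2 - (cmod (a*d + b*cnj c))^2
      = ((cmod a)^2 - (cmod b)^2) * ((cmod c)^2 - (cmod d)^2)"
    unfolding norm_sq by (simp add: algebra_simps power2_eq_square)
  then show ?thesis
    unfolding su11_def MN using M N by (intro exI[of _ "a*c + b*cnj d"] exI[of _ "a*d + b*cnj c"]) simp
qed

lemma su11_mat1: "su11 (mat 1)"
  unfolding su11_def mat_1_eq_mat2 by (intro exI[of _ 1] exI[of _ 0]) simp

lemma su11_matB: "su11 (matB l s)"
  unfolding su11_def matB_def by (intro exI[of _ "cis (l * s)"] exI[of _ 0]) (simp add: cis_cnj)

lemma mat2_conj_vec2:
  "mat2 a b (cnj b) (cnj a) *v vec2 u (cnj u) = vec2 (a*u + b*cnj u) (cnj (a*u + b*cnj u))"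
  by (simp add: mat2_vec2 algebra_simps)

text \<open>A matrix of SU(1,1) maps the circle of vectors \<open>(e\<^sup>i\<^sup>x, e\<^sup>-\<^sup>i\<^sup>x)\<close> to positive multiples of
  itself; \<open>angle_lift M F\<close> says that \<open>F\<close> is a real lift of the induced circle map.\<close>
definition angle_lift :: "cmat2 \<Rightarrow> (real \<Rightarrow> real) \<Rightarrow> bool" where
  "angle_lift M F \<longleftrightarrow>
     (\<forall>x. \<exists>r>0. M *v vec2 (cis x) (cnj (cis x)) = of_real r *s vec2 (cis (F x)) (cnj (cis (F x))))"

lemma vec2_cnj_eq_scale_iff:
  "vec2 w (cnj w) = of_real r *s vec2 z (cnj z) \<longleftrightarrow> w = of_real r * z"
  by (simp add: scale_vec2 vec2_eq_iff) (metis complex_cnj_complex_of_real complex_cnj_mult)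

lemma angle_lift_su11_iff:
  "angle_lift (mat2 a b (cnj b) (cnj a)) F \<longleftrightarrow>
     (\<forall>x. \<exists>r>0. a * cis x + b * cnj (cis x) = of_real r * cis (F x))"
  unfolding angle_lift_def mat2_conj_vec2 vec2_cnj_eq_scale_iff ..

lemma angle_lift_cong: "angle_lift M F \<Longrightarrow> (\<And>x. F x = F' x) \<Longrightarrow> angle_lift M F'"
  unfolding angle_lift_def by simp

lemma angle_lift_mult:
  assumes "angle_lift M F" "angle_lift N H"
  shows "angle_lift (M ** N) (F \<circ> H)"
  unfolding angle_lift_def
proof
  fix x
  obtain r where r: "r > 0"
    "N *v vec2 (cis x) (cnj (cis x)) = of_real r *s vec2 (cis (H x)) (cnj (cis (H x)))"
    using assms(2) angle_lift_def by blast
  obtain r' where r': "r' > 0"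
    "M *v vec2 (cis (H x)) (cnj (cis (H x))) = of_real r' *s vec2 (cis (F (H x))) (cnj (cis (F (H x))))"
    using assms(1) angle_lift_def by blast
  have "(M ** N) *v vec2 (cis x) (cnj (cis x)) = of_real r *s (M *v vec2 (cis (H x)) (cnj (cis (H x))))"
    by (simp add: matrix_vector_mul_assoc[symmetric] r(2) vector_scalar_commute)
  also have "\<dots> = of_real (r * r') *s vec2 (cis (F (H x))) (cnj (cis (F (H x))))"
    by (simp add: r'(2))
  finally show "\<exists>r>0. (M ** N) *v vec2 (cis x) (cnj (cis x))
      = of_real r *s vec2 (cis ((F \<circ> H) x)) (cnj (cis ((F \<circ> H) x)))"
    using r(1) r'(1) by (intro exI[of _ "r * r'"]) simp
qed

lemma angle_lift_mat1: "angle_lift (mat 1) (\<lambda>x. x)"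
  unfolding angle_lift_def by (auto intro: exI[of _ 1])

lemma angle_lift_matB: "angle_lift (matB l s) (\<lambda>x. x + l * s)"
  unfolding angle_lift_def matB_def
  by (auto intro!: exI[of _ 1] simp: mat2_vec2 scale_vec2 vec2_eq_iff cis_mult cis_cnj algebra_simps)

section \<open>The vertex matrices\<close>

definition thA :: "real \<Rightarrow> real" where "thA a = pi^2 / (2*a)"

definition regular_angle :: "real \<Rightarrow> bool" where "regular_angle a \<longleftrightarrow> sin (thA a) \<noteq> 0"

lemma regular_angle_iff_not_exceptional:
  assumes "0 < a"
  shows "regular_angle a \<longleftrightarrow> \<not> exceptional a"
proof -
  have "sin (thA a) = 0 \<longleftrightarrow> (\<exists>k::nat. k \<ge> 1 \<and> a = pi / (2 * real k))"
  proof
    assume "sin (thA a) = 0"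
    then obtain i :: int where i: "thA a = of_int i * pi" using sin_zero_iff_int2 by blast
    have "pi * (pi / (2*a)) = pi * of_int i" using i unfolding thA_def by (simp add: power2_eq_square)
    then have i_eq: "of_int i = pi / (2*a)" by (metis mult_cancel_left pi_neq_zero)
    moreover have "pi / (2*a) > 0" using assms by simp
    ultimately have "i > 0" by linarith
    moreover have "a = pi / (2 * real (nat i))" using i_eq \<open>i > 0\<close> assms by (simp add: field_simps)
    ultimately show "\<exists>k::nat. k \<ge> 1 \<and> a = pi / (2 * real k)" by (intro exI[of _ "nat i"]) simp
  next
    assume "\<exists>k::nat. k \<ge> 1 \<and> a = pi / (2 * real k)"
    then obtain k :: nat where k: "k \<ge> 1" "a = pi / (2 * real k)" by blast
    have "thA a = real k * pi" unfolding thA_def k(2) using k(1) by (simp add: power2_eq_square field_simps)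
    then show "sin (thA a) = 0" by (simp add: sin_zero_iff_int2)
  qed
  then show ?thesis unfolding regular_angle_def exceptional_def by blast
qed

lemma su11_matA:
  assumes "regular_angle a"
  shows "su11 (matA a)"
proof -
  define t where "t = thA a"
  have "sin t \<noteq> 0" using assms unfolding t_def regular_angle_def .
  then have "(1 / sin t)^2 - (cot t)^2 = 1" by (simp add: cot_def field_simps power2_eq_square)
  then show ?thesis
    unfolding su11_def matA_def Let_def thA_def[symmetric] t_def[symmetric]
    by (intro exI[of _ "complex_of_real (1 / sin t)"] exI[of _ "- \<i> * complex_of_real (cot t)"])
       (simp add: norm_mult norm_divide power_divide)
qed

definition qA :: "real \<Rightarrow> real" where "qA a = cos (thA a)"

text \<open>With \<open>t = thA a\<close>, \<open>matA a\<close> sends \<open>e\<^sup>i\<^sup>y\<close> to \<open>(1/sin t) e\<^sup>i\<^sup>y (1 - i cos t e\<^sup>-\<^sup>2\<^sup>i\<^sup>y)\<close>; since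
  \<open>|cos t| < 1\<close> the last factor has positive real part, so its argument is an arctangent
  and the lift below is continuous.\<close>
definition liftA :: "real \<Rightarrow> real \<Rightarrow> real" where
  "liftA a y = y + (if sin (thA a) > 0 then 0 else pi)
                 + arctan (- qA a * cos (2*y) / (1 - qA a * sin (2*y)))"

lemma abs_qA_less_1:
  assumes "regular_angle a"
  shows "\<bar>qA a\<bar> < 1"
proof -
  have "(qA a)^2 = 1 - (sin (thA a))^2" by (simp add: qA_def cos_squared_eq)
  moreover have "(sin (thA a))^2 > 0" using assms unfolding regular_angle_def by simp
  ultimately have "(qA a)^2 < 1" by linarith
  then show ?thesis by (simp add: abs_square_less_1)
qed

lemma one_minus_mult_sin_pos:
  assumes "\<bar>q\<bar> < (1::real)"
  shows "1 - q * sin y > 0"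
proof -
  have "\<bar>q * sin y\<bar> \<le> \<bar>q\<bar>" by (simp add: abs_mult mult_left_le abs_sin_le_one)
  then show ?thesis using assms by linarith
qed

lemma Complex_eq_polar_arctan:
  assumes "X > 0"
  shows "Complex X Y = of_real (sqrt (X^2 + Y^2)) * cis (arctan (Y/X))"
proof -
  have p: "sqrt (X^2 + Y^2) > 0" using assms by (simp add: add_pos_nonneg)
  have "1 + (Y/X)^2 = (X^2 + Y^2) / X^2" using assms by (simp add: field_simps power2_eq_square)
  then have s: "sqrt (1 + (Y/X)^2) = sqrt (X^2 + Y^2) / X" using assms by (simp add: real_sqrt_divide)
  have "cos (arctan (Y/X)) = X / sqrt (X^2 + Y^2)" "sin (arctan (Y/X)) = Y / sqrt (X^2 + Y^2)"
    unfolding cos_arctan sin_arctan s using assms p by simp_all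
  then show ?thesis using p by (simp add: complex_eq_iff)
qed

lemma angle_lift_matA:
  assumes "regular_angle a"
  shows "angle_lift (matA a) (liftA a)"
proof -
  define t where "t = thA a"
  define q where "q = qA a"
  have st: "sin t \<noteq> 0" using assms unfolding t_def regular_angle_def .
  have A: "matA a = mat2 (of_real (1/sin t)) (- \<i> * of_real (cot t))
      (cnj (- \<i> * of_real (cot t))) (cnj (of_real (1/sin t)))"
    unfolding matA_def Let_def thA_def[symmetric] t_def[symmetric] by simp
  have "\<exists>r>0. of_real (1/sin t) * cis x + - \<i> * of_real (cot t) * cnj (cis x) = of_real r * cis (liftA a x)"
    for x
  proof -
    define X where "X = 1 - q * sin (2*x)"
    define Y where "Y = - q * cos (2*x)"
    have X: "X > 0" unfolding X_def q_def using one_minus_mult_sin_pos abs_qA_less_1 assms by blast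
    have cot: "complex_of_real (cot t) = of_real (1/sin t) * of_real q"
      using st by (simp add: cot_def q_def qA_def t_def)
    have XY: "Complex X Y = 1 - \<i> * of_real q * cis (-(2*x))"
      by (simp add: complex_eq_iff X_def Y_def)
    have cis_x: "cis x * cis (-(2*x)) = cnj (cis x)" by (simp add: cis_mult cis_cnj)
    define d where "d = (if sin t > 0 then 0 else pi)"
    have sin_polar: "complex_of_real (1/sin t) = of_real \<bar>1/sin t\<bar> * cis d"
      using st by (auto simp: d_def complex_eq_iff abs_if)
    have lift: "liftA a x = x + d + arctan (Y/X)"
      unfolding liftA_def d_def t_def X_def Y_def q_def by simp
    have "of_real (1/sin t) * cis x + - \<i> * of_real (cot t) * cnj (cis x)
        = of_real (1/sin t) * cis x * Complex X Y"
      unfolding XY cot cis_x[symmetric] by (simp add: algebra_simps)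
    also have "\<dots> = of_real (\<bar>1/sin t\<bar> * sqrt (X^2 + Y^2)) * cis (liftA a x)"
      unfolding sin_polar Complex_eq_polar_arctan[OF X] lift by (simp add: cis_mult algebra_simps)
    finally show ?thesis
      using st X by (intro exI[of _ "\<bar>1/sin t\<bar> * sqrt (X^2 + Y^2)"]) (auto simp: add_pos_nonneg)
  qed
  then show ?thesis unfolding A angle_lift_su11_iff by simp
qed

lemma arctan_lift_has_derivative:
  assumes q: "\<bar>q\<bar> < (1::real)"
  shows "((\<lambda>y. y + d + arctan (- q * cos (2*y) / (1 - q * sin (2*y)))) has_real_derivative
          (1 - q^2) / (1 - 2*q * sin (2*y) + q^2)) (at y)"
proof -
  define D where "D = 1 - q * sin (2*y)"
  define N where "N = - q * cos (2*y)"
  have D: "D > 0" unfolding D_def using one_minus_mult_sin_pos[OF q] .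
  have DN: "D^2 + N^2 = 1 - 2*q * sin (2*y) + q^2"
  proof -
    have "D^2 + N^2 = 1 - 2*q * sin (2*y) + q^2 * ((sin (2*y))^2 + (cos (2*y))^2)"
      by (simp only: D_def N_def power2_eq_square) algebra
    then show ?thesis by simp
  qed
  have numer: "(- q * (- sin (2*y) * 2)) * D - N * (- q * (cos (2*y) * 2)) = 2*q * sin (2*y) - 2*q^2"
  proof -
    have "(- q * (- sin (2*y) * 2)) * D - N * (- q * (cos (2*y) * 2))
        = 2*q * sin (2*y) - 2*q^2 * ((sin (2*y))^2 + (cos (2*y))^2)"
      by (simp only: D_def N_def power2_eq_square) algebra
    then show ?thesis by simp
  qed
  have "((\<lambda>y. y + d + arctan (- q * cos (2*y) / (1 - q * sin (2*y)))) has_real_derivative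
     1 + inverse (1 + (N/D)^2) * (((- q * (- sin (2*y) * 2)) * D - N * (- q * (cos (2*y) * 2))) / (D * D)))
     (at y)"
    unfolding D_def N_def using D unfolding D_def by (intro derivative_eq_intros refl) auto
  moreover have "1 + inverse (1 + (N/D)^2) * ((2*q * sin (2*y) - 2*q^2) / (D * D))
      = (1 - q^2) / (D^2 + N^2)"
  proof -
    define E where "E = D^2 + N^2"
    have E: "E > 0" unfolding E_def using D by (simp add: add_pos_nonneg)
    have "inverse (1 + (N/D)^2) = D^2 / E" unfolding E_def using D by (simp add: field_simps power2_eq_square)
    then have "1 + inverse (1 + (N/D)^2) * ((2*q * sin (2*y) - 2*q^2) / (D * D))
        = (E + (2*q * sin (2*y) - 2*q^2)) / E"
      using D E by (simp add: field_simps power2_eq_square)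
    also have "E + (2*q * sin (2*y) - 2*q^2) = 1 - q^2" unfolding E_def DN by simp
    finally show ?thesis unfolding E_def .
  qed
  ultimately show ?thesis unfolding numer DN by simp
qed

definition lipA :: "real \<Rightarrow> real" where "lipA a = (1 - (qA a)^2) / (1 - \<bar>qA a\<bar>)^2"

lemma liftA_derivative_bounds:
  assumes "regular_angle a"
  shows "(1 - (qA a)^2) / (1 - 2*qA a * sin y + (qA a)^2) > 0"
    and "(1 - (qA a)^2) / (1 - 2*qA a * sin y + (qA a)^2) \<le> lipA a"
proof -
  have q: "\<bar>qA a\<bar> < 1" using abs_qA_less_1[OF assms] .
  have numer: "1 - (qA a)^2 > 0" using q by (simp add: abs_square_less_1)
  have "qA a * sin y \<le> \<bar>qA a\<bar>" using abs_sin_le_one[of y] q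
    by (metis abs_ge_self abs_mult mult_left_le abs_ge_zero order_trans)
  then have denom: "1 - 2*qA a * sin y + (qA a)^2 \<ge> (1 - \<bar>qA a\<bar>)^2"
    by (simp add: power2_eq_square algebra_simps abs_mult_self_eq)
  have "(1 - \<bar>qA a\<bar>)^2 > 0" using q by simp
  then show "(1 - (qA a)^2) / (1 - 2*qA a * sin y + (qA a)^2) > 0"
    using numer denom by (intro divide_pos_pos) linarith+
  show "(1 - (qA a)^2) / (1 - 2*qA a * sin y + (qA a)^2) \<le> lipA a"
    unfolding lipA_def using numer denom \<open>(1 - \<bar>qA a\<bar>)^2 > 0\<close> by (simp add: frac_le)
qed

lemma liftA_increment_bounds:
  assumes "regular_angle a" "y < y'"
  shows "0 < liftA a y' - liftA a y" "liftA a y' - liftA a y \<le> lipA a * (y' - y)"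
proof -
  let ?f' = "\<lambda>y. (1 - (qA a)^2) / (1 - 2*qA a * sin (2*y) + (qA a)^2)"
  have "liftA a = (\<lambda>y. y + (if sin (thA a) > 0 then 0 else pi)
                  + arctan (- qA a * cos (2*y) / (1 - qA a * sin (2*y))))"
    by (simp add: liftA_def fun_eq_iff)
  then have deriv: "\<And>y. (liftA a has_real_derivative ?f' y) (at y)"
    using arctan_lift_has_derivative[OF abs_qA_less_1[OF assms(1)]] by simp
  obtain z where z: "liftA a y' - liftA a y = (y' - y) * ?f' z"
    using MVT2[OF assms(2) deriv] by blast
  show "0 < liftA a y' - liftA a y"
    unfolding z using liftA_derivative_bounds(1)[OF assms(1), of "2*z"] assms(2) by (intro mult_pos_pos) auto
  show "liftA a y' - liftA a y \<le> lipA a * (y' - y)"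
  proof -
    have "(y' - y) * ?f' z \<le> (y' - y) * lipA a"
      using liftA_derivative_bounds(2)[OF assms(1), of "2*z"] assms(2) by (intro mult_left_mono) auto
    then show ?thesis unfolding z by (simp only: mult.commute)
  qed
qed

lemma liftA_strict_mono: "regular_angle a \<Longrightarrow> y < y' \<Longrightarrow> liftA a y < liftA a y'"
  using liftA_increment_bounds(1) by fastforce

lemma liftA_mono: "regular_angle a \<Longrightarrow> y \<le> y' \<Longrightarrow> liftA a y \<le> liftA a y'"
  using liftA_strict_mono by (cases "y = y'") (auto simp: less_le)

lemma liftA_lipschitz:
  assumes "regular_angle a"
  shows "\<bar>liftA a y - liftA a y'\<bar> \<le> lipA a * \<bar>y - y'\<bar>"
  using liftA_increment_bounds[OF assms, of y y'] liftA_increment_bounds[OF assms, of y' y]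
  by (cases y y' rule: linorder_cases) auto

lemma lipA_pos: "regular_angle a \<Longrightarrow> lipA a > 0"
  using liftA_derivative_bounds[of a 0] by linarith

lemma liftA_add_pi: "liftA a (y + pi) = liftA a y + pi"
proof -
  have "cos (2*(y + pi)) = cos (2*y)" "sin (2*(y + pi)) = sin (2*y)"
    by (simp_all add: distrib_left cos_add sin_add)
  then show ?thesis unfolding liftA_def by simp
qed

lemma liftA_lower_bound: "liftA a y > y - pi/2"
proof -
  have "(if sin (thA a) > 0 then 0 else pi) \<ge> 0" by simp
  then show ?thesis
    unfolding liftA_def using arctan_lbound[of "- qA a * cos (2*y) / (1 - qA a * sin (2*y))"] by linarith
qed


section \<open>Families of circle lifts\<close>

text \<open>\<open>F s\<close> lifts a degree-one map of the circle \<open>\<real>/\<pi>\<int>\<close> depending on the spectral parameter \<open>s\<close>.\<close>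
definition lift_family :: "(real \<Rightarrow> real \<Rightarrow> real) \<Rightarrow> bool" where
  "lift_family F \<longleftrightarrow> (\<forall>s x. F s (x + pi) = F s x + pi)
     \<and> (\<exists>K C. K \<ge> 0 \<and> C \<ge> 0 \<and> (\<forall>s s' x x'. \<bar>F s x - F s' x'\<bar> \<le> K * \<bar>x - x'\<bar> + C * \<bar>s - s'\<bar>))
     \<and> (\<forall>s s' x x'. s \<le> s' \<longrightarrow> x \<le> x' \<longrightarrow> F s x \<le> F s' x')
     \<and> (\<forall>s x x'. x < x' \<longrightarrow> F s x < F s x')"

definition strict_lift_family :: "(real \<Rightarrow> real \<Rightarrow> real) \<Rightarrow> bool" where
  "strict_lift_family F \<longleftrightarrow> lift_family F \<and> (\<forall>s s' x. s < s' \<longrightarrow> F s x < F s' x)"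

lemma lift_familyI:
  fixes F :: "real \<Rightarrow> real \<Rightarrow> real"
  assumes "\<And>s x. F s (x + pi) = F s x + pi" "K \<ge> 0" "C \<ge> 0"
    "\<And>s s' x x'. \<bar>F s x - F s' x'\<bar> \<le> K * \<bar>x - x'\<bar> + C * \<bar>s - s'\<bar>"
    "\<And>s s' x x'. s \<le> s' \<Longrightarrow> x \<le> x' \<Longrightarrow> F s x \<le> F s' x'"
    "\<And>s x x'. x < x' \<Longrightarrow> F s x < F s x'"
  shows "lift_family F"
  unfolding lift_family_def using assms by blast

lemma lift_family_add_pi: "lift_family F \<Longrightarrow> F s (x + pi) = F s x + pi"
  unfolding lift_family_def by simp

lemma lift_family_mono: "lift_family F \<Longrightarrow> s \<le> s' \<Longrightarrow> x \<le> x' \<Longrightarrow> F s x \<le> F s' x'"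
  unfolding lift_family_def by simp

lemma lift_family_strict_mono: "lift_family F \<Longrightarrow> x < x' \<Longrightarrow> F s x < F s x'"
  unfolding lift_family_def by simp

lemma lift_family_lipschitz:
  "lift_family F \<Longrightarrow>
     \<exists>K C. K \<ge> 0 \<and> C \<ge> 0 \<and> (\<forall>s s' x x'. \<bar>F s x - F s' x'\<bar> \<le> K * \<bar>x - x'\<bar> + C * \<bar>s - s'\<bar>)"
  unfolding lift_family_def by simp

lemma strict_lift_family_lift_family: "strict_lift_family F \<Longrightarrow> lift_family F"
  unfolding strict_lift_family_def by simp

lemma strict_lift_family_strict_mono_param: "strict_lift_family F \<Longrightarrow> s < s' \<Longrightarrow> F s x < F s' x"
  unfolding strict_lift_family_def by simp

lemma continuous_on_of_abs_diff_le:
  fixes f :: "real \<Rightarrow> real"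
  assumes "C \<ge> 0" "\<And>x y. \<bar>f x - f y\<bar> \<le> C * \<bar>x - y\<bar>"
  shows "continuous_on U f"
  using assms by (intro lipschitz_on_continuous_on[of C] lipschitz_onI) (auto simp: dist_real_def)

lemma lift_family_continuous_param:
  assumes "lift_family F"
  shows "continuous_on UNIV (\<lambda>s. F s x)"
proof -
  obtain K C where KC: "C \<ge> 0" "\<And>s s' x x'. \<bar>F s x - F s' x'\<bar> \<le> K * \<bar>x - x'\<bar> + C * \<bar>s - s'\<bar>"
    using lift_family_lipschitz[OF assms] by blast
  show ?thesis using KC(2)[of _ x _ x] by (intro continuous_on_of_abs_diff_le[OF KC(1)]) auto
qed

lemma lift_family_continuous_displacement:
  assumes "lift_family F"
  shows "continuous_on U (\<lambda>x. F s x - x)"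
proof -
  obtain K C where KC: "K \<ge> 0" "\<And>s s' x x'. \<bar>F s x - F s' x'\<bar> \<le> K * \<bar>x - x'\<bar> + C * \<bar>s - s'\<bar>"
    using lift_family_lipschitz[OF assms] by blast
  have "\<bar>(F s x - x) - (F s y - y)\<bar> \<le> (K + 1) * \<bar>x - y\<bar>" for x y
    using KC(2)[of s x s y] by (simp add: algebra_simps)
  then show ?thesis using KC(1) by (intro continuous_on_of_abs_diff_le[of "K + 1"]) auto
qed

lemma lift_family_id: "lift_family (\<lambda>s x. x)"
  by (rule lift_familyI[where K=1 and C=0]) auto

lemma lift_family_comp:
  assumes "lift_family F" "lift_family H"
  shows "lift_family (\<lambda>s x. F s (H s x))"
proof -
  obtain K C where KC: "K \<ge> 0" "C \<ge> 0"
    "\<And>s s' x x'. \<bar>F s x - F s' x'\<bar> \<le> K * \<bar>x - x'\<bar> + C * \<bar>s - s'\<bar>"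
    using lift_family_lipschitz[OF assms(1)] by blast
  obtain K' C' where KC': "K' \<ge> 0" "C' \<ge> 0"
    "\<And>s s' x x'. \<bar>H s x - H s' x'\<bar> \<le> K' * \<bar>x - x'\<bar> + C' * \<bar>s - s'\<bar>"
    using lift_family_lipschitz[OF assms(2)] by blast
  show ?thesis
  proof (rule lift_familyI[where K="K*K'" and C="K*C' + C"])
    fix s s' x x' :: real
    have "\<bar>F s (H s x) - F s' (H s' x')\<bar> \<le> K * \<bar>H s x - H s' x'\<bar> + C * \<bar>s - s'\<bar>" by (rule KC(3))
    also have "\<dots> \<le> K * (K' * \<bar>x - x'\<bar> + C' * \<bar>s - s'\<bar>) + C * \<bar>s - s'\<bar>"
      using KC'(3)[of s x s' x'] KC(1) by (simp add: mult_left_mono)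
    finally show "\<bar>F s (H s x) - F s' (H s' x')\<bar> \<le> (K*K') * \<bar>x - x'\<bar> + (K*C' + C) * \<bar>s - s'\<bar>"
      by (simp add: algebra_simps)
  qed (use KC KC' assms in \<open>auto simp: lift_family_add_pi lift_family_mono lift_family_strict_mono\<close>)
qed

lemma strict_lift_family_comp_left:
  assumes "strict_lift_family F" "lift_family H"
  shows "strict_lift_family (\<lambda>s x. F s (H s x))"
  unfolding strict_lift_family_def
proof (intro conjI allI impI)
  have F: "lift_family F" using strict_lift_family_lift_family[OF assms(1)] .
  show "lift_family (\<lambda>s x. F s (H s x))" using lift_family_comp[OF F assms(2)] .
  fix s s' x :: real
  assume "s < s'"
  then have "F s (H s x) < F s' (H s x)" by (rule strict_lift_family_strict_mono_param[OF assms(1)])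
  also have "\<dots> \<le> F s' (H s' x)"
    using lift_family_mono[OF F, of s' s'] lift_family_mono[OF assms(2), of s s' x x] \<open>s < s'\<close> by simp
  finally show "F s (H s x) < F s' (H s' x)" .
qed

lemma strict_lift_family_comp_right:
  assumes "lift_family F" "strict_lift_family H"
  shows "strict_lift_family (\<lambda>s x. F s (H s x))"
  unfolding strict_lift_family_def
proof (intro conjI allI impI)
  show "lift_family (\<lambda>s x. F s (H s x))"
    using lift_family_comp[OF assms(1) strict_lift_family_lift_family[OF assms(2)]] .
  fix s s' x :: real
  assume "s < s'"
  have "F s (H s x) < F s (H s' x)"
    by (rule lift_family_strict_mono[OF assms(1) strict_lift_family_strict_mono_param[OF assms(2) \<open>s < s'\<close>]])
  also have "\<dots> \<le> F s' (H s' x)" using lift_family_mono[OF assms(1)] \<open>s < s'\<close> by simp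
  finally show "F s (H s x) < F s' (H s' x)" .
qed

lemma lift_family_shift:
  assumes "ll \<ge> 0"
  shows "lift_family (\<lambda>s x. x + ll * s)"
proof (rule lift_familyI[where K=1 and C=ll])
  fix s s' x x' :: real
  have "\<bar>x + ll * s - (x' + ll * s')\<bar> \<le> \<bar>x - x'\<bar> + \<bar>ll * (s - s')\<bar>"
    by (simp add: algebra_simps abs_triangle_ineq[of "x - x'" "ll * (s - s')", simplified algebra_simps])
  then show "\<bar>x + ll * s - (x' + ll * s')\<bar> \<le> 1 * \<bar>x - x'\<bar> + ll * \<bar>s - s'\<bar>"
    using assms by (simp add: abs_mult)
next
  fix s s' x x' :: real
  assume "s \<le> s'" "x \<le> x'"
  then show "x + ll * s \<le> x' + ll * s'" using assms by (simp add: add_mono mult_left_mono)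
qed (use assms in auto)

lemma strict_lift_family_shift: "ll > 0 \<Longrightarrow> strict_lift_family (\<lambda>s x. x + ll * s)"
  unfolding strict_lift_family_def using lift_family_shift by (auto simp: mult_strict_left_mono)

lemma lift_family_liftA:
  assumes "regular_angle a"
  shows "lift_family (\<lambda>s x. liftA a x)"
proof (rule lift_familyI[where K="lipA a" and C=0])
  show "\<bar>liftA a x - liftA a x'\<bar> \<le> lipA a * \<bar>x - x'\<bar> + 0 * \<bar>s - s'\<bar>" for s s' x x'
    using liftA_lipschitz[OF assms] by simp
qed (use liftA_add_pi liftA_mono[OF assms] liftA_strict_mono[OF assms] lipA_pos[OF assms] in auto)

lemma lift_family_liftA_shift:
  "regular_angle a \<Longrightarrow> ll \<ge> 0 \<Longrightarrow> lift_family (\<lambda>s x. liftA a (x + ll * s))"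
  using lift_family_comp[OF lift_family_liftA lift_family_shift] by simp

lemma strict_lift_family_liftA_shift:
  "regular_angle a \<Longrightarrow> ll > 0 \<Longrightarrow> strict_lift_family (\<lambda>s x. liftA a (x + ll * s))"
  using strict_lift_family_comp_right[OF lift_family_liftA strict_lift_family_shift] by simp


section \<open>Lifts of the transfer matrices\<close>

fun liftT :: "(nat \<Rightarrow> real) \<Rightarrow> (nat \<Rightarrow> real) \<Rightarrow> nat \<Rightarrow> real \<Rightarrow> real \<Rightarrow> real" where
  "liftT al l 0 s x = x"
| "liftT al l (Suc j) s x = liftA (al (Suc j)) (liftT al l j s x + l (Suc j) * s)"

fun liftW :: "(nat \<Rightarrow> real) \<Rightarrow> (nat \<Rightarrow> real) \<Rightarrow> (nat \<Rightarrow> nat) \<Rightarrow> nat \<Rightarrow> real \<Rightarrow> real \<Rightarrow> real" where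
  "liftW al l ix 0 s x = x"
| "liftW al l ix (Suc k) s x = liftW al l ix k s (liftA (al (ix (Suc k))) (x + l (ix (Suc k)) * s))"

lemma prodT_angle_lift:
  assumes "\<forall>i\<in>{1..j}. regular_angle (al i)"
  shows "angle_lift (prodT al l s j) (liftT al l j s) \<and> su11 (prodT al l s j)"
  using assms
proof (induction j)
  case 0
  then show ?case using angle_lift_mat1 su11_mat1 by (simp add: angle_lift_def)
next
  case (Suc j)
  have reg: "regular_angle (al (Suc j))" using Suc.prems by simp
  have IH: "angle_lift (prodT al l s j) (liftT al l j s)" "su11 (prodT al l s j)" using Suc by auto
  have "angle_lift (matA (al (Suc j)) ** matB (l (Suc j)) s ** prodT al l s j)
      ((liftA (al (Suc j)) \<circ> (\<lambda>x. x + l (Suc j) * s)) \<circ> liftT al l j s)"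
    by (intro angle_lift_mult angle_lift_matA[OF reg] angle_lift_matB IH(1))
  then have "angle_lift (prodT al l s (Suc j)) ((liftA (al (Suc j)) \<circ> (\<lambda>x. x + l (Suc j) * s)) \<circ> liftT al l j s)"
    by simp
  then have "angle_lift (prodT al l s (Suc j)) (liftT al l (Suc j) s)" by (rule angle_lift_cong) simp
  moreover have "su11 (prodT al l s (Suc j))" using su11_mult su11_matA[OF reg] su11_matB IH(2) by simp
  ultimately show ?case ..
qed

lemma prodW_angle_lift:
  assumes "\<forall>i\<in>{1..k}. regular_angle (al (ix i))" "\<And>i. ix i = cyc n (int e - int i)"
  shows "angle_lift (prodW n al l s e k) (liftW al l ix k s) \<and> su11 (prodW n al l s e k)"
  using assms(1)
proof (induction k)
  case 0
  then show ?case using angle_lift_mat1 su11_mat1 by (simp add: angle_lift_def)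
next
  case (Suc k)
  have reg: "regular_angle (al (ix (Suc k)))" using Suc.prems by simp
  have IH: "angle_lift (prodW n al l s e k) (liftW al l ix k s)" "su11 (prodW n al l s e k)"
    using Suc by auto
  have W: "prodW n al l s e (Suc k) = prodW n al l s e k ** matA (al (ix (Suc k))) ** matB (l (ix (Suc k))) s"
    by (simp only: prodW.simps assms(2))
  have "angle_lift (prodW n al l s e (Suc k))
      ((liftW al l ix k s \<circ> liftA (al (ix (Suc k)))) \<circ> (\<lambda>x. x + l (ix (Suc k)) * s))"
    unfolding W by (intro angle_lift_mult angle_lift_matA[OF reg] angle_lift_matB IH(1))
  then have "angle_lift (prodW n al l s e (Suc k)) (liftW al l ix (Suc k) s)" by (rule angle_lift_cong) simp
  moreover have "su11 (prodW n al l s e (Suc k))" unfolding W by (intro su11_mult su11_matA[OF reg] su11_matB IH(2))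
  ultimately show ?case ..
qed

lemma strict_lift_family_liftT:
  assumes "\<forall>i\<in>{1..j}. regular_angle (al i) \<and> l i > 0" "j \<ge> 1"
  shows "strict_lift_family (liftT al l j)"
  using assms
proof (induction j)
  case (Suc j)
  have step: "regular_angle (al (Suc j))" "l (Suc j) > 0" using Suc.prems by auto
  have IH: "lift_family (liftT al l j)"
  proof (cases "j = 0")
    case True
    have "liftT al l 0 = (\<lambda>s x. x)" by (simp add: fun_eq_iff)
    then show ?thesis using True lift_family_id by simp
  qed (use Suc strict_lift_family_lift_family in auto)
  have "liftT al l (Suc j) = (\<lambda>s x. (\<lambda>s x. liftA (al (Suc j)) (x + l (Suc j) * s)) s (liftT al l j s x))"
    by (simp add: fun_eq_iff)
  then show ?case using strict_lift_family_comp_left[OF strict_lift_family_liftA_shift[OF step] IH] by simp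
qed simp

lemma lift_family_liftW:
  assumes "\<forall>i\<in>{1..k}. regular_angle (al (ix i)) \<and> l (ix i) > 0"
  shows "lift_family (liftW al l ix k)"
  using assms
proof (induction k)
  case 0
  then show ?case using lift_family_id by (simp add: fun_eq_iff)
next
  case (Suc k)
  have step: "regular_angle (al (ix (Suc k)))" "l (ix (Suc k)) \<ge> 0" using Suc.prems by (auto intro: less_imp_le)
  have "liftW al l ix (Suc k)
      = (\<lambda>s x. liftW al l ix k s ((\<lambda>s x. liftA (al (ix (Suc k))) (x + l (ix (Suc k)) * s)) s x))"
    by (simp add: fun_eq_iff)
  then show ?case using lift_family_comp[OF _ lift_family_liftA_shift[OF step]] Suc by simp
qed

lemma liftT_mono_lengths:
  assumes "\<forall>i\<in>{1..j}. regular_angle (al i)" "\<forall>i\<in>{1..j}. l i \<le> l' i" "s \<ge> 0"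
  shows "liftT al l j s x \<le> liftT al l' j s x"
  using assms(1,2)
proof (induction j)
  case (Suc j)
  have "l (Suc j) * s \<le> l' (Suc j) * s" using Suc.prems assms(3) by (simp add: mult_right_mono)
  then show ?case using Suc liftA_mono[of "al (Suc j)"] by simp
qed simp

lemma liftW_mono_lengths:
  assumes "\<forall>i\<in>{1..k}. regular_angle (al (ix i)) \<and> l (ix i) > 0" "\<forall>i\<in>{1..k}. l (ix i) \<le> l' (ix i)" "s \<ge> 0"
  shows "liftW al l ix k s x \<le> liftW al l' ix k s x"
  using assms(1,2)
proof (induction k arbitrary: x)
  case (Suc k)
  let ?a = "al (ix (Suc k))"
  have "l (ix (Suc k)) * s \<le> l' (ix (Suc k)) * s" using Suc.prems assms(3) by (simp add: mult_right_mono)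
  then have "liftA ?a (x + l (ix (Suc k)) * s) \<le> liftA ?a (x + l' (ix (Suc k)) * s)"
    using liftA_mono Suc.prems by simp
  then have "liftW al l ix k s (liftA ?a (x + l (ix (Suc k)) * s))
      \<le> liftW al l ix k s (liftA ?a (x + l' (ix (Suc k)) * s))"
    using lift_family_mono[OF lift_family_liftW] Suc.prems by simp
  also have "\<dots> \<le> liftW al l' ix k s (liftA ?a (x + l' (ix (Suc k)) * s))" using Suc by auto
  finally show ?case by simp
qed simp

lemma liftT_at_0: "liftT al l j 0 x = liftT al l' j 0 x"
  by (induction j) auto

lemma liftW_at_0: "liftW al l ix k 0 x = liftW al l' ix k 0 x"
  by (induction k arbitrary: x) auto

lemma liftT_lower_bound:
  assumes "s \<ge> 0"
  shows "liftT al l j s x \<ge> x + (\<Sum>i=1..j. l i) * s - real j * pi / 2"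
proof (induction j)
  case (Suc j)
  have "liftT al l (Suc j) s x > liftT al l j s x + l (Suc j) * s - pi/2" using liftA_lower_bound by simp
  moreover have "x + (\<Sum>i=1..Suc j. l i) * s - real (Suc j) * pi / 2
      = (x + (\<Sum>i=1..j. l i) * s - real j * pi / 2) + l (Suc j) * s - pi/2"
    by (simp add: algebra_simps)
  ultimately show ?case using Suc by linarith
qed simp

lemma liftW_lower_bound:
  assumes "\<forall>i\<in>{1..k}. regular_angle (al (ix i)) \<and> l (ix i) > 0" "s \<ge> 0"
  shows "liftW al l ix k s x \<ge> x - real k * pi / 2"
  using assms(1)
proof (induction k arbitrary: x)
  case (Suc k)
  let ?a = "al (ix (Suc k))"
  have "l (ix (Suc k)) > 0" using Suc.prems by auto
  then have "l (ix (Suc k)) * s \<ge> 0" using assms(2) by simp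
  then have "liftA ?a (x + l (ix (Suc k)) * s) \<ge> x - pi/2"
    using liftA_lower_bound[where a = ?a and y = "x + l (ix (Suc k)) * s"] by linarith
  then have "liftW al l ix k s (liftA ?a (x + l (ix (Suc k)) * s)) \<ge> liftW al l ix k s (x - pi/2)"
    using lift_family_mono[OF lift_family_liftW] Suc.prems by simp
  moreover have "liftW al l ix k s (x - pi/2) \<ge> x - pi/2 - real k * pi / 2" using Suc by auto
  moreover have "x - real (Suc k) * pi / 2 = x - pi/2 - real k * pi / 2" by (simp add: algebra_simps)
  ultimately show ?case by simp
qed simp


section \<open>Fixed vectors of SU(1,1) matrices\<close>

lemma mat2_conj_fixed_iff:
  "mat2 a b (cnj b) (cnj a) *v v = v \<longleftrightarrow> a * v$1 + b * v$2 = v$1 \<and> cnj b * v$1 + cnj a * v$2 = v$2"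
  by (subst (1 2) vec2_components) (simp add: mat2_vec2 vec2_eq_iff)

lemma norm_diff_eq_1_imp_mult_cnj: "(cmod a)^2 - (cmod b)^2 = 1 \<Longrightarrow> a * cnj a - b * cnj b = 1"
  by (metis cmod_power2 complex_mult_cnj complex_of_real_def of_real_1 of_real_diff)

lemma su11_fixed_space_trivial:
  assumes H: "(cmod a)^2 - (cmod b)^2 = 1" and R: "Re a \<noteq> 1"
  shows "{v. mat2 a b (cnj b) (cnj a) *v v = v} = {0}"
proof (intro set_eqI iffI)
  fix v :: cvec2
  assume "v \<in> {v. mat2 a b (cnj b) (cnj a) *v v = v}"
  then have r1: "(a - 1) * v$1 + b * v$2 = 0" and r2: "cnj b * v$1 + (cnj a - 1) * v$2 = 0"
    by (auto simp: mat2_conj_fixed_iff algebra_simps)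
  define det where "det = (a - 1) * (cnj a - 1) - b * cnj b"
  have "det = 2 - (a + cnj a)" unfolding det_def using norm_diff_eq_1_imp_mult_cnj[OF H]
    by (simp add: algebra_simps)
  moreover have "a + cnj a \<noteq> 2" using R by (simp add: complex_eq_iff)
  ultimately have "det \<noteq> 0" by simp
  moreover have "det * v$1 = (cnj a - 1) * ((a - 1) * v$1 + b * v$2) - b * (cnj b * v$1 + (cnj a - 1) * v$2)"
    and "det * v$2 = (a - 1) * (cnj b * v$1 + (cnj a - 1) * v$2) - cnj b * ((a - 1) * v$1 + b * v$2)"
    unfolding det_def by (simp_all add: algebra_simps)
  then have "det * v$1 = 0" "det * v$2 = 0" unfolding r1 r2 by simp_all
  ultimately show "v \<in> {0}" by (simp add: vec_eq_iff forall_2)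
qed simp

lemma su11_fixed_space_line:
  assumes H: "(cmod a)^2 - (cmod b)^2 = 1" and R: "Re a = 1" and b: "b \<noteq> 0"
  shows "{v. mat2 a b (cnj b) (cnj a) *v v = v} = range (\<lambda>c. c *s vec2 1 ((1 - a) / b))"
proof (intro set_eqI iffI)
  fix v :: cvec2
  assume "v \<in> {v. mat2 a b (cnj b) (cnj a) *v v = v}"
  then have "a * v$1 + b * v$2 = v$1" by (simp add: mat2_conj_fixed_iff)
  then have "v$2 = v$1 * ((1 - a) / b)" using b by (simp add: field_simps)
  then have "v = v$1 *s vec2 1 ((1 - a) / b)" by (subst vec2_components) (simp add: scale_vec2)
  then show "v \<in> range (\<lambda>c. c *s vec2 1 ((1 - a) / b))" by blast
next
  fix v :: cvec2
  assume "v \<in> range (\<lambda>c. c *s vec2 1 ((1 - a) / b))"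
  then obtain c where v1: "v$1 = c" and v2: "v$2 = c * ((1 - a) / b)" by (auto simp: scale_vec2 vec2_def)
  have "cnj a = 2 - a" using R by (simp add: complex_eq_iff)
  then have "cnj b * b + cnj a * (1 - a) = 1 - a"
    using norm_diff_eq_1_imp_mult_cnj[OF H] by (simp add: algebra_simps)
  moreover have "cnj b * c + cnj a * (c * ((1 - a) / b)) = c * (cnj b * b + cnj a * (1 - a)) / b"
    using b by (simp add: field_simps)
  ultimately have "cnj b * v$1 + cnj a * v$2 = v$2" unfolding v1 v2 by simp
  moreover have "a * v$1 + b * v$2 = v$1" unfolding v1 v2 using b by (simp add: field_simps)
  ultimately show "v \<in> {v. mat2 a b (cnj b) (cnj a) *v v = v}" by (simp add: mat2_conj_fixed_iff)
qed

lemma geom_mult1_su11: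
  assumes H: "(cmod a)^2 - (cmod b)^2 = 1"
  shows "geom_mult1 (mat2 a b (cnj b) (cnj a))
    = of_bool (Re a = 1 \<and> cmod b \<le> Im a) + of_bool (Re a = 1 \<and> Im a \<le> - cmod b)"
proof (cases "Re a = 1")
  case R: True
  then have Im_sq: "(Im a)^2 = (cmod b)^2" using H by (simp add: cmod_power2)
  show ?thesis
  proof (cases "b = 0")
    case True
    then have "Im a = 0" using Im_sq by simp
    then have "a = 1" using R by (simp add: complex_eq_iff)
    then have "{v. mat2 a b (cnj b) (cnj a) *v v = v} = UNIV"
      using True by (simp add: mat_1_eq_mat2[symmetric])
    then show ?thesis using True \<open>a = 1\<close> vec_dim_card[where 'a=complex and 'n=2]
      unfolding geom_mult1_def by simp
  next
    case False
    have "geom_mult1 (mat2 a b (cnj b) (cnj a)) = vec.dim {vec2 1 ((1 - a) / b)}"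
      unfolding geom_mult1_def su11_fixed_space_line[OF H R False] by (simp add: vec.span_singleton[symmetric])
    also have "\<dots> = 1" by (simp add: vec2_eq_iff vec_eq_iff forall_2 vec2_def)
    finally show ?thesis using Im_sq False R by (auto simp: power2_eq_iff)
  qed
next
  case False
  then show ?thesis unfolding geom_mult1_def su11_fixed_space_trivial[OF H False] by simp
qed

section \<open>Displacement of the circle map\<close>

lemma eigen_relation:
  assumes H: "(cmod a)^2 - (cmod b)^2 = 1"
    and e: "a * cis x + b * cnj (cis x) = of_real t * cis x"
  shows "\<bar>t\<bar> \<le> t * Re a"
proof -
  have "cnj (cis x) * (a * cis x + b * cnj (cis x)) = cnj (cis x) * (of_real t * cis x)" using e by simp
  then have "b * cnj (cis x)^2 = of_real t - a" by (simp add: cis_cnj cis_mult algebra_simps power2_eq_square)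
  then have "cmod b = cmod (of_real t - a)" by (metis norm_mult norm_power complex_mod_cnj norm_cis power_one mult_1_right)
  then have "(cmod b)^2 = (t - Re a)^2 + (Im a)^2" by (simp add: cmod_power2)
  moreover have "(cmod a)^2 = (Re a)^2 + (Im a)^2" by (simp add: cmod_power2)
  ultimately have "2 * t * Re a = 1 + t^2" using H by (simp add: power2_eq_square algebra_simps)
  moreover have "2 * \<bar>t\<bar> \<le> 1 + t^2"
  proof -
    have "0 \<le> (\<bar>t\<bar> - 1)^2" by simp
    then show ?thesis by (simp add: power2_diff power2_abs)
  qed
  ultimately show ?thesis by linarith
qed

lemma sgn_sin_near_2pi_multiple:
  fixes k :: int
  assumes "2*pi * of_int k - pi < y" "y < 2*pi * of_int k + pi"
  shows "sgn (sin y) = sgn (y - 2*pi * of_int k)"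
proof -
  define z where "z = y - 2*pi * of_int k"
  have y: "sin y = sin z" unfolding z_def by (simp add: sin_diff)
  have "-pi < z" "z < pi" using assms unfolding z_def by auto
  then have "sgn (sin z) = sgn z"
    using sin_gt_zero[of z] sin_gt_zero[of "-z"] by (cases z "0::real" rule: linorder_cases) auto
  then show ?thesis unfolding y z_def .
qed

lemma abs_Im_mult_cis_le: "\<bar>Im (b * cis y)\<bar> \<le> cmod b"
  by (metis abs_Im_le_cmod norm_cis norm_mult mult_1_right)

lemma cis_add_2pi_int: "cis (y + 2*pi * of_int k) = cis y"
  by (simp add: cis_def complex_eq_iff cos_add sin_add)

lemma exists_cis_minus_double_eq:
  assumes "cmod w = 1"
  shows "\<exists>x\<in>{0..pi}. cis (-(2*x)) = w"
proof -
  have "w \<noteq> 0" using assms by auto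
  then have t: "- pi < Arg w" "Arg w \<le> pi" "cis (Arg w) = w"
    using Arg_bounded cis_Arg[of w] assms by (auto simp: sgn_div_norm)
  show ?thesis
  proof (cases "Arg w \<le> 0")
    case True
    then show ?thesis using t by (intro bexI[of _ "- Arg w / 2"]) auto
  next
    case False
    have "cis (-(2*(pi - Arg w / 2))) = cis (Arg w)" by (simp add: cis_def complex_eq_iff cos_diff sin_diff)
    then show ?thesis using t False by (intro bexI[of _ "pi - Arg w / 2"]) auto
  qed
qed

lemma exists_Im_mult_cis_eq:
  assumes "\<bar>c\<bar> = 1"
  shows "\<exists>x\<in>{0..pi}. Im (b * cis (-(2*x))) = c * cmod b"
proof (cases "b = 0")
  case False
  define w where "w = \<i> * of_real c * of_real (cmod b) / b"
  have "cmod w = 1" using False assms unfolding w_def by (simp add: norm_mult norm_divide)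
  then obtain x where x: "x \<in> {0..pi}" "cis (-(2*x)) = w" using exists_cis_minus_double_eq by blast
  have "b * w = \<i> * of_real (c * cmod b)" unfolding w_def using False by (simp add: field_simps)
  then show ?thesis using x by (intro bexI[of _ x]) auto
qed auto

text \<open>\<open>x + G x\<close> is a continuous lift of the circle map of an SU(1,1) matrix; the dimension of its
  fixed space is read off the extreme values of the displacement \<open>G\<close>.\<close>
locale su11_displacement =
  fixes a b :: complex and G :: "real \<Rightarrow> real"
  assumes norm_eq: "(cmod a)^2 - (cmod b)^2 = 1"
    and rep: "\<And>x. x \<in> {0..pi} \<Longrightarrow> \<exists>r>0. a * cis x + b * cnj (cis x) = of_real r * cis (x + G x)"
    and cont: "continuous_on {0..pi} G"
begin

lemma Re_ge_1_if_displacement_2pi: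
  assumes "x \<in> {0..pi}" "G x = 2*pi * of_int k"
  shows "Re a \<ge> 1"
proof -
  obtain r where r: "r > 0" "a * cis x + b * cnj (cis x) = of_real r * cis (x + G x)" using rep assms(1) by blast
  have "a * cis x + b * cnj (cis x) = of_real r * cis x" using r(2) assms(2) by (simp add: cis_add_2pi_int)
  then have "\<bar>r\<bar> \<le> r * Re a" by (rule eigen_relation[OF norm_eq])
  then show ?thesis using r(1) mult_le_cancel_left_pos[of r 1 "Re a"] by simp
qed

lemma displacement_ne_odd_pi:
  assumes "Re a > -1" "x \<in> {0..pi}"
  shows "G x \<noteq> 2*pi * of_int k + pi"
proof
  assume g: "G x = 2*pi * of_int k + pi"
  obtain r where r: "r > 0" "a * cis x + b * cnj (cis x) = of_real r * cis (x + G x)" using rep assms(2) by blast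
  have "cis (x + G x) = cis (x + pi + 2*pi * of_int k)" using g by (simp add: algebra_simps)
  also have "\<dots> = - cis x" unfolding cis_add_2pi_int by (simp add: cis_def complex_eq_iff)
  finally have "cis (x + G x) = - cis x" .
  then have "a * cis x + b * cnj (cis x) = of_real (-r) * cis x" using r(2) by simp
  then have "\<bar>-r\<bar> \<le> - r * Re a" by (rule eigen_relation[OF norm_eq])
  then have "r * 1 \<le> r * (- Re a)" using r(1) by simp
  then show False using assms(1) r(1) mult_le_cancel_left_pos[of r 1 "- Re a"] by simp
qed

lemma displacement_window:
  assumes x0: "x0 \<in> {0..pi}" "G x0 = 2*pi * of_int k" and x: "x \<in> {0..pi}"
  shows "2*pi * of_int k - pi < G x" "G x < 2*pi * of_int k + pi"
proof -
  have Re: "Re a > -1" using Re_ge_1_if_displacement_2pi[OF x0] by simp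
  have IVT_between: "\<exists>z\<in>{0..pi}. G z = c"
    if uv: "u \<in> {0..pi}" "v \<in> {0..pi}" and c: "G u \<le> c" "c \<le> G v" for u v c
  proof (cases "u \<le> v")
    case True
    have "continuous_on {u..v} G" by (rule continuous_on_subset[OF cont]) (use uv in auto)
    then obtain z where "u \<le> z" "z \<le> v" "G z = c" using IVT'[of G u c v] c True by blast
    then show ?thesis using uv by auto
  next
    case False
    have "continuous_on {v..u} G" by (rule continuous_on_subset[OF cont]) (use uv in auto)
    then obtain z where "v \<le> z" "z \<le> u" "G z = c" using IVT2'[of G u c v] c False by auto
    then show ?thesis using uv by auto
  qed
  show "G x < 2*pi * of_int k + pi"
  proof (rule ccontr)
    assume "\<not> ?thesis"
    then obtain z where "z \<in> {0..pi}" "G z = 2*pi * of_int k + pi"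
      using IVT_between[OF x0(1) x, of "2*pi * of_int k + pi"] x0(2) pi_gt_zero by auto
    then show False using displacement_ne_odd_pi[OF Re] by blast
  qed
  show "2*pi * of_int k - pi < G x"
  proof (rule ccontr)
    assume "\<not> ?thesis"
    then obtain z where "z \<in> {0..pi}" "G z = 2*pi * of_int k - pi"
      using IVT_between[OF x x0(1), of "2*pi * of_int k - pi"] x0(2) pi_gt_zero by auto
    then have "z \<in> {0..pi}" "G z = 2*pi * of_int (k - 1) + pi" by (simp_all add: algebra_simps)
    then show False using displacement_ne_odd_pi[OF Re] by blast
  qed
qed

lemma sgn_displacement:
  assumes x0: "x0 \<in> {0..pi}" "G x0 = 2*pi * of_int k" and x: "x \<in> {0..pi}"
  shows "sgn (G x - 2*pi * of_int k) = sgn (Im a + Im (b * cis (-(2*x))))"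
proof -
  obtain r where r: "r > 0" "a * cis x + b * cnj (cis x) = of_real r * cis (x + G x)" using rep x by blast
  have "cnj (cis x) * (a * cis x + b * cnj (cis x)) = cnj (cis x) * (of_real r * cis (x + G x))"
    using r(2) by simp
  moreover have "cnj (cis x) * cis x = 1" "cnj (cis x) * cnj (cis x) = cis (-(2*x))"
    "cnj (cis x) * cis (x + G x) = cis (G x)" by (simp_all add: cis_cnj cis_mult)
  ultimately have "a + b * cis (-(2*x)) = of_real r * cis (G x)" by (simp add: algebra_simps)
  then have "Im (a + b * cis (-(2*x))) = Im (of_real r * cis (G x))" by (rule arg_cong)
  then have "r * sin (G x) = Im a + Im (b * cis (-(2*x)))" by simp
  then have "sgn (Im a + Im (b * cis (-(2*x)))) = sgn r * sgn (sin (G x))" by (metis sgn_mult)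
  also have "\<dots> = sgn (sin (G x))" using r(1) by simp
  also have "\<dots> = sgn (G x - 2*pi * of_int k)"
    using sgn_sin_near_2pi_multiple displacement_window[OF x0 x] by blast
  finally show ?thesis ..
qed

lemma exists_displacement_2pi:
  assumes R: "Re a = 1"
  obtains x0 k where "x0 \<in> {0..pi}" "G x0 = 2*pi * of_int k"
proof -
  have "(cmod (a - 1))^2 = (cmod b)^2" using norm_eq R by (simp add: cmod_power2)
  then have ab: "cmod (a - 1) = cmod b" by (simp add: power2_eq_iff_nonneg)
  obtain x0 where x0: "x0 \<in> {0..pi}" "a * cis x0 + b * cnj (cis x0) = cis x0"
  proof (cases "b = 0")
    case True
    then show ?thesis using ab that[of 0] by simp
  next
    case False
    then have a1: "a - 1 \<noteq> 0" using ab by auto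
    have "cmod (cnj (- b / (a - 1))) = 1"
      unfolding complex_mod_cnj using ab a1 False by (simp add: norm_divide)
    then obtain x0 where x0: "x0 \<in> {0..pi}" "cis (-(2*x0)) = cnj (- b / (a - 1))"
      using exists_cis_minus_double_eq by blast
    then have "cis (2*x0) = - b / (a - 1)" by (metis cis_cnj complex_cnj_cnj)
    then have "(a - 1) * cis (2*x0) * cnj (cis x0) = - b * cnj (cis x0)" using a1 by simp
    moreover have "cis (2*x0) * cnj (cis x0) = cis x0" by (simp add: cis_cnj cis_mult)
    ultimately have "(a - 1) * cis x0 = - b * cnj (cis x0)" by (simp add: algebra_simps)
    then show ?thesis using x0(1) that[of x0] by (simp add: algebra_simps)
  qed
  obtain r where r: "r > 0" "a * cis x0 + b * cnj (cis x0) = of_real r * cis (x0 + G x0)"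
    using rep x0(1) by blast
  have "cnj (cis x0) * (of_real r * cis (x0 + G x0)) = cnj (cis x0) * cis x0" using x0(2) r(2) by simp
  then have e: "of_real r * cis (G x0) = 1" by (simp add: cis_cnj cis_mult algebra_simps)
  then have "cmod (of_real r * cis (G x0)) = 1" by simp
  then have "r = 1" using r(1) by (simp add: norm_mult)
  then have "cos (G x0) = 1" using e by (simp add: complex_eq_iff)
  then obtain n :: int where "G x0 = of_int n * 2 * pi" using cos_one_2pi_int by blast
  then show ?thesis using that[OF x0(1), of n] by simp
qed

lemma min_displacement_2pi_iff:
  assumes xm: "xm \<in> {0..pi}" "\<And>x. x \<in> {0..pi} \<Longrightarrow> G xm \<le> G x"
  shows "(\<exists>k::int. G xm = 2*pi * of_int k) \<longleftrightarrow> Re a = 1 \<and> cmod b \<le> Im a"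
proof
  assume "\<exists>k::int. G xm = 2*pi * of_int k"
  then obtain k where k: "G xm = 2*pi * of_int k" by blast
  obtain x2 where x2: "x2 \<in> {0..pi}" "Im (b * cis (-(2*x2))) = -1 * cmod b"
    using exists_Im_mult_cis_eq[of "-1" b] by auto
  have "0 \<le> sgn (G x2 - 2*pi * of_int k)" using xm(2)[OF x2(1)] k by simp
  then have Im: "cmod b \<le> Im a" using sgn_displacement[OF xm(1) k x2(1)] x2(2) by simp
  have "Re a \<ge> 1" by (rule Re_ge_1_if_displacement_2pi[OF xm(1) k])
  moreover have "(Re a)^2 \<le> 1"
    using norm_eq Im power_mono[OF Im norm_ge_zero, of 2] by (simp add: cmod_power2)
  ultimately have "Re a = 1" by (simp add: abs_square_le_1)
  with Im show "Re a = 1 \<and> cmod b \<le> Im a" by simp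
next
  assume "Re a = 1 \<and> cmod b \<le> Im a"
  then obtain x0 k where x0: "x0 \<in> {0..pi}" "G x0 = 2*pi * of_int k"
    using exists_displacement_2pi by blast
  have "0 \<le> Im a + Im (b * cis (-(2*xm)))"
    using abs_Im_mult_cis_le[of b "-(2*xm)"] \<open>Re a = 1 \<and> cmod b \<le> Im a\<close> by linarith
  then have "0 \<le> sgn (G xm - 2*pi * of_int k)" unfolding sgn_displacement[OF x0 xm(1)] by simp
  then have "G xm \<ge> 2*pi * of_int k" by simp
  then show "\<exists>k::int. G xm = 2*pi * of_int k" using xm(2)[OF x0(1)] x0(2) by (intro exI[of _ k]) simp
qed

lemma max_displacement_2pi_iff:
  assumes xM: "xM \<in> {0..pi}" "\<And>x. x \<in> {0..pi} \<Longrightarrow> G x \<le> G xM"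
  shows "(\<exists>k::int. G xM = 2*pi * of_int k) \<longleftrightarrow> Re a = 1 \<and> Im a \<le> - cmod b"
proof
  assume "\<exists>k::int. G xM = 2*pi * of_int k"
  then obtain k where k: "G xM = 2*pi * of_int k" by blast
  obtain x1 where x1: "x1 \<in> {0..pi}" "Im (b * cis (-(2*x1))) = 1 * cmod b"
    using exists_Im_mult_cis_eq[of 1 b] by auto
  have "sgn (G x1 - 2*pi * of_int k) \<le> 0" using xM(2)[OF x1(1)] k by simp
  then have Im: "Im a \<le> - cmod b" using sgn_displacement[OF xM(1) k x1(1)] x1(2) by simp
  have "Re a \<ge> 1" by (rule Re_ge_1_if_displacement_2pi[OF xM(1) k])
  moreover have "cmod b \<le> - Im a" using Im by simp
  then have "(Re a)^2 \<le> 1"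
    using norm_eq power_mono[OF \<open>cmod b \<le> - Im a\<close> norm_ge_zero, of 2] by (simp add: cmod_power2)
  ultimately have "Re a = 1" by (simp add: abs_square_le_1)
  with Im show "Re a = 1 \<and> Im a \<le> - cmod b" by simp
next
  assume "Re a = 1 \<and> Im a \<le> - cmod b"
  then obtain x0 k where x0: "x0 \<in> {0..pi}" "G x0 = 2*pi * of_int k"
    using exists_displacement_2pi by blast
  have "Im a + Im (b * cis (-(2*xM))) \<le> 0"
    using abs_Im_mult_cis_le[of b "-(2*xM)"] \<open>Re a = 1 \<and> Im a \<le> - cmod b\<close> by linarith
  then have "sgn (G xM - 2*pi * of_int k) \<le> 0" unfolding sgn_displacement[OF x0 xM(1)] by simp
  then have "G xM \<le> 2*pi * of_int k" by simp
  then show "\<exists>k::int. G xM = 2*pi * of_int k" using xM(2)[OF x0(1)] x0(2) by (intro exI[of _ k]) simp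
qed

lemma geom_mult1_eq_extreme_displacements:
  assumes "xm \<in> {0..pi}" "\<And>x. x \<in> {0..pi} \<Longrightarrow> G xm \<le> G x"
    and "xM \<in> {0..pi}" "\<And>x. x \<in> {0..pi} \<Longrightarrow> G x \<le> G xM"
  shows "geom_mult1 (mat2 a b (cnj b) (cnj a))
    = of_bool (\<exists>k::int. G xm = 2*pi * of_int k) + of_bool (\<exists>k::int. G xM = 2*pi * of_int k)"
  using geom_mult1_su11[OF norm_eq] min_displacement_2pi_iff[OF assms(1,2)]
    max_displacement_2pi_iff[OF assms(3,4)] by simp

end


section \<open>Extreme displacements of a lift family\<close>

definition min_disp :: "(real \<Rightarrow> real \<Rightarrow> real) \<Rightarrow> real \<Rightarrow> real" where
  "min_disp F s = (INF x\<in>{0..pi}. F s x - x)"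

definition max_disp :: "(real \<Rightarrow> real \<Rightarrow> real) \<Rightarrow> real \<Rightarrow> real" where
  "max_disp F s = (SUP x\<in>{0..pi}. F s x - x)"

lemma min_disp_attained:
  assumes "lift_family F"
  obtains x where "x \<in> {0..pi}" "min_disp F s = F s x - x" "\<And>y. y \<in> {0..pi} \<Longrightarrow> F s x - x \<le> F s y - y"
proof -
  have "\<exists>x\<in>{0..pi}. \<forall>y\<in>{0..pi}. F s x - x \<le> F s y - y"
    using continuous_attains_inf[OF compact_Icc _ lift_family_continuous_displacement[OF assms]] by simp
  then obtain x where x: "x \<in> {0..pi}" "\<forall>y\<in>{0..pi}. F s x - x \<le> F s y - y" by blast
  moreover have "min_disp F s = F s x - x" unfolding min_disp_def using x by (intro cInf_eq_minimum) auto
  ultimately show ?thesis using that by blast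
qed

lemma max_disp_attained:
  assumes "lift_family F"
  obtains x where "x \<in> {0..pi}" "max_disp F s = F s x - x" "\<And>y. y \<in> {0..pi} \<Longrightarrow> F s y - y \<le> F s x - x"
proof -
  have "\<exists>x\<in>{0..pi}. \<forall>y\<in>{0..pi}. F s y - y \<le> F s x - x"
    using continuous_attains_sup[OF compact_Icc _ lift_family_continuous_displacement[OF assms]] by simp
  then obtain x where x: "x \<in> {0..pi}" "\<forall>y\<in>{0..pi}. F s y - y \<le> F s x - x" by blast
  moreover have "max_disp F s = F s x - x" unfolding max_disp_def using x by (intro cSup_eq_maximum) auto
  ultimately show ?thesis using that by blast
qed

lemma min_disp_le:
  assumes "lift_family F" "x \<in> {0..pi}"
  shows "min_disp F s \<le> F s x - x"
proof -
  obtain x0 where "min_disp F s = F s x0 - x0" "\<And>y. y \<in> {0..pi} \<Longrightarrow> F s x0 - x0 \<le> F s y - y"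
    using min_disp_attained[OF assms(1)] by blast
  then show ?thesis using assms(2) by simp
qed

lemma max_disp_ge:
  assumes "lift_family F" "x \<in> {0..pi}"
  shows "F s x - x \<le> max_disp F s"
proof -
  obtain x0 where "max_disp F s = F s x0 - x0" "\<And>y. y \<in> {0..pi} \<Longrightarrow> F s y - y \<le> F s x0 - x0"
    using max_disp_attained[OF assms(1)] by blast
  then show ?thesis using assms(2) by simp
qed

lemma min_disp_cong: "(\<And>x. F s x = F' s x) \<Longrightarrow> min_disp F s = min_disp F' s"
  unfolding min_disp_def by simp

lemma max_disp_cong: "(\<And>x. F s x = F' s x) \<Longrightarrow> max_disp F s = max_disp F' s"
  unfolding max_disp_def by simp

lemma min_disp_mono_family:
  assumes "lift_family F" "lift_family F'" "\<And>x. x \<in> {0..pi} \<Longrightarrow> F s x \<le> F' s x"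
  shows "min_disp F s \<le> min_disp F' s"
proof -
  obtain x where x: "x \<in> {0..pi}" "min_disp F' s = F' s x - x" using min_disp_attained[OF assms(2)] .
  have "min_disp F s \<le> F s x - x" using min_disp_le[OF assms(1) x(1)] .
  also have "\<dots> \<le> F' s x - x" using assms(3)[OF x(1)] by simp
  finally show ?thesis using x(2) by simp
qed

lemma max_disp_mono_family:
  assumes "lift_family F" "lift_family F'" "\<And>x. x \<in> {0..pi} \<Longrightarrow> F s x \<le> F' s x"
  shows "max_disp F s \<le> max_disp F' s"
proof -
  obtain x where x: "x \<in> {0..pi}" "max_disp F s = F s x - x" using max_disp_attained[OF assms(1)] .
  have "F s x - x \<le> F' s x - x" using assms(3)[OF x(1)] by simp
  also have "\<dots> \<le> max_disp F' s" using max_disp_ge[OF assms(2) x(1)] .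
  finally show ?thesis using x(2) by simp
qed

lemma min_disp_strict_mono:
  assumes "strict_lift_family F" "s < s'"
  shows "min_disp F s < min_disp F s'"
proof -
  have F: "lift_family F" using strict_lift_family_lift_family[OF assms(1)] .
  obtain x where x: "x \<in> {0..pi}" "min_disp F s' = F s' x - x" using min_disp_attained[OF F] .
  have "min_disp F s \<le> F s x - x" using min_disp_le[OF F x(1)] .
  also have "\<dots> < F s' x - x" using strict_lift_family_strict_mono_param[OF assms] by simp
  finally show ?thesis using x(2) by simp
qed

lemma max_disp_strict_mono:
  assumes "strict_lift_family F" "s < s'"
  shows "max_disp F s < max_disp F s'"
proof -
  have F: "lift_family F" using strict_lift_family_lift_family[OF assms(1)] .
  obtain x where x: "x \<in> {0..pi}" "max_disp F s = F s x - x" using max_disp_attained[OF F] .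
  have "F s x - x < F s' x - x" using strict_lift_family_strict_mono_param[OF assms] by simp
  also have "\<dots> \<le> max_disp F s'" using max_disp_ge[OF F x(1)] .
  finally show ?thesis using x(2) by simp
qed

lemma min_disp_continuous:
  assumes F: "lift_family F"
  shows "continuous_on UNIV (min_disp F)"
proof -
  obtain K C where KC: "C \<ge> 0" "\<And>s s' x x'. \<bar>F s x - F s' x'\<bar> \<le> K * \<bar>x - x'\<bar> + C * \<bar>s - s'\<bar>"
    using lift_family_lipschitz[OF F] by blast
  have one_sided: "min_disp F s' \<le> min_disp F s + C * \<bar>s - s'\<bar>" for s s'
  proof -
    obtain x where x: "x \<in> {0..pi}" "min_disp F s = F s x - x" using min_disp_attained[OF F] .
    then show ?thesis using min_disp_le[OF F x(1), of s'] KC(2)[of s x s' x] by simp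
  qed
  have "\<bar>min_disp F s - min_disp F s'\<bar> \<le> C * \<bar>s - s'\<bar>" for s s'
    using one_sided[of s s'] one_sided[of s' s] by (simp add: abs_le_iff abs_minus_commute)
  then show ?thesis by (intro continuous_on_of_abs_diff_le[OF KC(1)])
qed

lemma max_disp_continuous:
  assumes F: "lift_family F"
  shows "continuous_on UNIV (max_disp F)"
proof -
  obtain K C where KC: "C \<ge> 0" "\<And>s s' x x'. \<bar>F s x - F s' x'\<bar> \<le> K * \<bar>x - x'\<bar> + C * \<bar>s - s'\<bar>"
    using lift_family_lipschitz[OF F] by blast
  have one_sided: "max_disp F s \<le> max_disp F s' + C * \<bar>s - s'\<bar>" for s s'
  proof -
    obtain x where x: "x \<in> {0..pi}" "max_disp F s = F s x - x" using max_disp_attained[OF F] .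
    then show ?thesis using max_disp_ge[OF F x(1), of s'] KC(2)[of s x s' x] by simp
  qed
  have "\<bar>max_disp F s - max_disp F s'\<bar> \<le> C * \<bar>s - s'\<bar>" for s s'
    using one_sided[of s s'] one_sided[of s' s] by (simp add: abs_le_iff abs_minus_commute)
  then show ?thesis by (intro continuous_on_of_abs_diff_le[OF KC(1)])
qed

lemma min_disp_lower_bound:
  assumes "lift_family F" "\<And>x. L \<le> F s x - x"
  shows "L \<le> min_disp F s"
proof -
  obtain x where "min_disp F s = F s x - x" using min_disp_attained[OF assms(1)] by blast
  then show ?thesis using assms(2) by simp
qed

lemma geom_mult1_via_extreme_disp:
  assumes M: "su11 M" "angle_lift M (F s)" and F: "lift_family F"
  shows "geom_mult1 M
    = of_bool (\<exists>k::int. min_disp F s = 2*pi * of_int k) + of_bool (\<exists>k::int. max_disp F s = 2*pi * of_int k)"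
proof -
  obtain a b where ab: "M = mat2 a b (cnj b) (cnj a)" "(cmod a)^2 - (cmod b)^2 = 1"
    using M(1) su11_def by blast
  interpret su11_displacement a b "\<lambda>x. F s x - x"
  proof
    show "\<exists>r>0. a * cis x + b * cnj (cis x) = of_real r * cis (x + (F s x - x))" for x
      using M(2) unfolding ab(1) angle_lift_su11_iff by simp
  qed (use ab(2) lift_family_continuous_displacement[OF F] in auto)
  obtain xm where xm: "xm \<in> {0..pi}" "min_disp F s = F s xm - xm"
    "\<And>y. y \<in> {0..pi} \<Longrightarrow> F s xm - xm \<le> F s y - y" using min_disp_attained[OF F, of s] by blast
  obtain xM where xM: "xM \<in> {0..pi}" "max_disp F s = F s xM - xM"
    "\<And>y. y \<in> {0..pi} \<Longrightarrow> F s y - y \<le> F s xM - xM" using max_disp_attained[OF F, of s] by blast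
  show ?thesis
    unfolding ab(1) xm(2) xM(2) by (rule geom_mult1_eq_extreme_displacements[OF xm(1,3) xM(1,3)])
qed


section \<open>Counting level crossings\<close>

text \<open>For increasing \<open>g\<close>, the number of \<open>t \<in> (0, s]\<close> at which \<open>g t \<in> c + p\<int>\<close>.\<close>
definition crossings :: "(real \<Rightarrow> real) \<Rightarrow> real \<Rightarrow> real \<Rightarrow> real \<Rightarrow> nat" where
  "crossings g c p s = nat (\<lfloor>(g s - c) / p\<rfloor> - \<lfloor>(g 0 - c) / p\<rfloor>)"

lemma level_crossings_bij:
  fixes g :: "real \<Rightarrow> real"
  assumes mono: "\<And>t t'. t < t' \<Longrightarrow> g t < g t'" and cont: "continuous_on UNIV g"
    and s: "s \<ge> 0" and p: "p > 0"
  shows "bij_betw (\<lambda>t. \<lfloor>(g t - c) / p\<rfloor>) {t. 0 < t \<and> t \<le> s \<and> (\<exists>k::int. g t = c + p * of_int k)}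
           {\<lfloor>(g 0 - c) / p\<rfloor><..\<lfloor>(g s - c) / p\<rfloor>}"
proof -
  define idx where "idx t = \<lfloor>(g t - c) / p\<rfloor>" for t
  define A where "A = {t. 0 < t \<and> t \<le> s \<and> (\<exists>k::int. g t = c + p * of_int k)}"
  have level_iff: "g t = c + p * of_int k \<longleftrightarrow> (g t - c) / p = of_int k" for t k
    using p by (auto simp: field_simps)
  have idx_level: "idx t = k" if "g t = c + p * of_int k" for t k
    using that unfolding idx_def level_iff by simp
  have idx_iff: "k \<in> {idx 0<..idx s} \<longleftrightarrow> g 0 < c + p * of_int k \<and> c + p * of_int k \<le> g s" for k
    using p by (simp add: idx_def floor_less_iff le_floor_iff field_simps)
  have inj: "inj_on idx A"
  proof (rule inj_onI)
    fix t t' assume "t \<in> A" "t' \<in> A" and eq: "idx t = idx t'"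
    then obtain k k' where kk: "g t = c + p * of_int k" "g t' = c + p * of_int k'" unfolding A_def by blast
    then have "k = k'" using eq idx_level[OF kk(1)] idx_level[OF kk(2)] by simp
    then have "g t = g t'" using kk by simp
    then show "t = t'" using mono[of t t'] mono[of t' t] by (cases t t' rule: linorder_cases) auto
  qed
  have "idx ` A = {idx 0<..idx s}"
  proof (intro set_eqI iffI)
    fix k assume "k \<in> idx ` A"
    then obtain t j where t: "0 < t" "t \<le> s" "g t = c + p * of_int j" "k = idx t" unfolding A_def by blast
    have "g t \<le> g s" using mono[of t s] t(2) by (cases "t = s") auto
    then show "k \<in> {idx 0<..idx s}" unfolding idx_iff t(4) idx_level[OF t(3)] using t mono[of 0 t] by simp
  next
    fix k assume "k \<in> {idx 0<..idx s}"
    then have k: "g 0 < c + p * of_int k" "c + p * of_int k \<le> g s" unfolding idx_iff by auto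
    have "continuous_on {0..s} g" using cont by (rule continuous_on_subset) auto
    then obtain t where t: "0 \<le> t" "t \<le> s" "g t = c + p * of_int k"
      using IVT'[of g 0 "c + p * of_int k" s] k s by auto
    have "t \<noteq> 0" using t k by auto
    then have "t \<in> A" unfolding A_def using t by auto
    then show "k \<in> idx ` A" using idx_level[OF t(3)] by (intro rev_image_eqI) auto
  qed
  then show ?thesis using inj unfolding bij_betw_def A_def idx_def by simp
qed

lemma card_level_crossings:
  fixes g :: "real \<Rightarrow> real"
  assumes "\<And>t t'. t < t' \<Longrightarrow> g t < g t'" "continuous_on UNIV g" "s \<ge> 0" "p > 0"
  shows "finite {t. 0 < t \<and> t \<le> s \<and> (\<exists>k::int. g t = c + p * of_int k)}"
    and "card {t. 0 < t \<and> t \<le> s \<and> (\<exists>k::int. g t = c + p * of_int k)} = crossings g c p s"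
  using bij_betw_finite[OF level_crossings_bij[OF assms]] bij_betw_same_card[OF level_crossings_bij[OF assms]]
  unfolding crossings_def by auto

lemma sum_card_filter_swap:
  assumes "finite E" "finite U"
  shows "(\<Sum>t\<in>U. card {e\<in>E. P e t}) = (\<Sum>e\<in>E. card {t\<in>U. P e t})"
proof -
  have "(\<Sum>t\<in>U. card {e\<in>E. P e t}) = (\<Sum>t\<in>U. \<Sum>e\<in>E. of_bool (P e t))"
    using assms(1) by (simp add: sum_of_bool_eq Int_def conj_commute)
  also have "\<dots> = (\<Sum>e\<in>E. \<Sum>t\<in>U. of_bool (P e t))" by (rule sum.swap)
  also have "\<dots> = (\<Sum>e\<in>E. card {t\<in>U. P e t})"
    using assms(2) by (simp add: sum_of_bool_eq Int_def conj_commute)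
  finally show ?thesis .
qed

lemma sum_mult_up_to_split_0:
  fixes mult :: "real \<Rightarrow> nat"
  assumes U: "finite U" "\<And>t. t \<in> U \<Longrightarrow> 0 < t \<and> t \<le> s" and s: "s \<ge> 0"
    and supp: "\<And>t. 0 < t \<Longrightarrow> t \<le> s \<Longrightarrow> 0 < mult t \<Longrightarrow> t \<in> U"
  shows "(\<Sum>t\<in>{t. 0 \<le> t \<and> t \<le> s \<and> 0 < mult t}. mult t) = mult 0 + (\<Sum>t\<in>U. mult t)"
proof -
  have "{t. 0 \<le> t \<and> t \<le> s \<and> 0 < mult t} \<subseteq> insert 0 U"
    using supp by (auto simp: le_less)
  moreover have "\<forall>t \<in> insert 0 U - {t. 0 \<le> t \<and> t \<le> s \<and> 0 < mult t}. mult t = 0"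
  proof
    fix t assume "t \<in> insert 0 U - {t. 0 \<le> t \<and> t \<le> s \<and> 0 < mult t}"
    moreover have "0 \<le> t \<and> t \<le> s" if "t \<in> insert 0 U" using that s U(2)[of t] by auto
    ultimately show "mult t = 0" by auto
  qed
  ultimately have "(\<Sum>t\<in>{t. 0 \<le> t \<and> t \<le> s \<and> 0 < mult t}. mult t) = (\<Sum>t\<in>insert 0 U. mult t)"
    by (rule sum.mono_neutral_left[OF finite_insert[THEN iffD2, OF U(1)]])
  moreover have "0 \<notin> U" using U(2) by blast
  ultimately show ?thesis using U(1) by simp
qed

lemma sum_multiplicities_eq_crossings:
  fixes g :: "'e \<Rightarrow> real \<Rightarrow> real" and mult :: "real \<Rightarrow> nat"
  assumes E: "finite E" and p: "p > 0" and s: "s \<ge> 0"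
    and mono: "\<And>e t t'. e \<in> E \<Longrightarrow> t < t' \<Longrightarrow> g e t < g e t'"
    and cont: "\<And>e. e \<in> E \<Longrightarrow> continuous_on UNIV (g e)"
    and P: "\<And>e t. e \<in> E \<Longrightarrow> t > 0 \<Longrightarrow> P e t \<longleftrightarrow> (\<exists>k::int. g e t = c e + p * of_int k)"
    and mult: "\<And>t. t > 0 \<Longrightarrow> mult t = card {e\<in>E. P e t}"
  shows "(\<Sum>t\<in>{t. 0 \<le> t \<and> t \<le> s \<and> 0 < mult t}. mult t) = mult 0 + (\<Sum>e\<in>E. crossings (g e) (c e) p s)"
proof -
  define Z where "Z e = {t. 0 < t \<and> t \<le> s \<and> P e t}" for e
  have Z: "Z e = {t. 0 < t \<and> t \<le> s \<and> (\<exists>k::int. g e t = c e + p * of_int k)}" if "e \<in> E" for e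
    unfolding Z_def using P[OF that] by auto
  define U where "U = (\<Union>e\<in>E. Z e)"
  have "finite (Z e)" if "e \<in> E" for e
    using card_level_crossings(1)[OF mono[OF that] cont[OF that] s p] Z[OF that] by simp
  then have U: "finite U" unfolding U_def using E by blast
  have U_pos: "t \<in> U \<Longrightarrow> 0 < t \<and> t \<le> s" for t unfolding U_def Z_def by auto
  have supp: "t \<in> U" if "0 < t" "t \<le> s" "0 < mult t" for t
  proof -
    have "0 < card {e\<in>E. P e t}" using that mult by auto
    then obtain e where "e \<in> E" "P e t" by (auto simp: card_gt_0_iff)
    then show ?thesis using that unfolding U_def Z_def by auto
  qed
  have "(\<Sum>t\<in>{t. 0 \<le> t \<and> t \<le> s \<and> 0 < mult t}. mult t) = mult 0 + (\<Sum>t\<in>U. mult t)"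
    by (rule sum_mult_up_to_split_0[OF U U_pos s supp])
  also have "(\<Sum>t\<in>U. mult t) = (\<Sum>t\<in>U. card {e\<in>E. P e t})"
    using mult U_pos by (intro sum.cong) simp_all
  also have "\<dots> = (\<Sum>e\<in>E. card {t\<in>U. P e t})"
    by (rule sum_card_filter_swap[OF E U])
  also have "\<dots> = (\<Sum>e\<in>E. crossings (g e) (c e) p s)"
  proof (rule sum.cong[OF refl])
    fix e assume e: "e \<in> E"
    have "{t\<in>U. P e t} = Z e" using e unfolding U_def Z_def by auto
    then show "card {t\<in>U. P e t} = crossings (g e) (c e) p s"
      using card_level_crossings(2)[OF mono[OF e] cont[OF e] s p] Z[OF e] by simp
  qed
  finally show ?thesis .
qed

lemma crossings_mono:
  assumes "p > 0" "g 0 = g' 0" "g s \<le> g' s"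
  shows "crossings g c p s \<le> crossings g' c p s"
proof -
  have "(g s - c) / p \<le> (g' s - c) / p" using assms by (simp add: divide_right_mono)
  then have "\<lfloor>(g s - c) / p\<rfloor> \<le> \<lfloor>(g' s - c) / p\<rfloor>" by (rule floor_mono)
  then show ?thesis unfolding crossings_def assms(2) by simp
qed

lemma crossings_unbounded:
  assumes L: "L > 0" and p: "p > 0" and g: "\<And>s. s \<ge> 0 \<Longrightarrow> L * s - D \<le> g s"
  shows "\<exists>s\<ge>0. m \<le> crossings g c p s"
proof -
  define K where "K = \<lfloor>(g 0 - c) / p\<rfloor>"
  define s where "s = max 0 ((p * (of_int K + of_nat m + 1) + c + D) / L)"
  have "s \<ge> 0" unfolding s_def by simp
  have "(p * (of_int K + of_nat m + 1) + c + D) / L \<le> s" unfolding s_def by simp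
  then have "p * (of_int K + of_nat m + 1) + c + D \<le> L * s" using L by (simp add: pos_divide_le_eq mult.commute)
  then have "of_int (K + int m + 1) \<le> (g s - c) / p"
    using g[OF \<open>s \<ge> 0\<close>] p by (simp add: field_simps)
  then have "K + int m + 1 \<le> \<lfloor>(g s - c) / p\<rfloor>" by (simp only: le_floor_iff)
  then show ?thesis using \<open>s \<ge> 0\<close> unfolding crossings_def K_def[symmetric] by (intro exI[of _ s]) simp
qed


section \<open>Counting quasi-eigenvalues\<close>

lemma cyc_in_range:
  assumes "n \<ge> 1"
  shows "cyc n i \<in> {1..n}"
proof -
  have "(i - 1) mod int n \<ge> 0" "(i - 1) mod int n < int n" using assms by auto
  then show ?thesis unfolding cyc_def by auto
qed

lemma cyc_minus_n:
  assumes "n \<ge> 1" "e \<in> {1..n}"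
  shows "cyc n (int e - int n) = e"
proof -
  have "int e - int n - 1 = (int e - 1) - int n" by simp
  then have "(int e - int n - 1) mod int n = (int e - 1) mod int n" by (simp only: minus_mod_self2)
  also have "\<dots> = int e - 1" using assms by (intro mod_pos_pos_trivial) auto
  finally show ?thesis unfolding cyc_def using assms by auto
qed

lemma prev_dist_bounds:
  assumes n: "n \<ge> 1" and e: "e \<in> exc_vertices n al"
  shows "1 \<le> prev_dist n al e" "prev_dist n al e \<le> n"
    and "\<And>k. 1 \<le> k \<Longrightarrow> k < prev_dist n al e \<Longrightarrow> \<not> exceptional (al (cyc n (int e - int k)))"
proof -
  let ?P = "\<lambda>d. d \<ge> 1 \<and> exceptional (al (cyc n (int e - int d)))"
  have Pn: "?P n" using n cyc_minus_n[OF n] e unfolding exc_vertices_def by simp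
  have "?P (prev_dist n al e)" unfolding prev_dist_def by (rule LeastI[of ?P n, OF Pn])
  then show "1 \<le> prev_dist n al e" by simp
  show "prev_dist n al e \<le> n" unfolding prev_dist_def by (rule Least_le[of ?P n, OF Pn])
  fix k assume k: "1 \<le> k" "k < prev_dist n al e"
  then show "\<not> exceptional (al (cyc n (int e - int k)))"
    using not_less_Least[of k ?P] unfolding prev_dist_def by blast
qed

definition back_index :: "nat \<Rightarrow> nat \<Rightarrow> nat \<Rightarrow> nat" where
  "back_index n e k = cyc n (int e - int k)"

definition liftU :: "nat \<Rightarrow> (nat \<Rightarrow> real) \<Rightarrow> (nat \<Rightarrow> real) \<Rightarrow> nat \<Rightarrow> real \<Rightarrow> real \<Rightarrow> real" where
  "liftU n al l e s x = liftW al l (back_index n e) (prev_dist n al e - 1) s x + l e * s"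

definition phase :: "real \<Rightarrow> real" where
  "phase a = (if parityO a = 1 then - pi/4 else pi/4)"

lemma Xvec_eq_phase:
  "Xvec a = vec2 (of_real (1 / sqrt 2) * cis (phase a)) (cnj (of_real (1 / sqrt 2) * cis (phase a)))"
  unfolding Xvec_def phase_def Xeven_def Xodd_def by (simp add: cis_cnj)

lemma herm_su11_eq_0_iff:
  assumes F: "angle_lift (mat2 a b (cnj b) (cnj a)) F" and c: "c \<noteq> 0"
  shows "herm (mat2 a b (cnj b) (cnj a) *v vec2 (of_real c * cis u) (cnj (of_real c * cis u)))
              (vec2 (of_real c * cis w) (cnj (of_real c * cis w))) = 0
     \<longleftrightarrow> cos (F u - w) = 0"
proof -
  obtain r where r: "r > 0" "a * cis u + b * cnj (cis u) = of_real r * cis (F u)"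
    using F unfolding angle_lift_su11_iff by blast
  have "a * (of_real c * cis u) + b * cnj (of_real c * cis u) = of_real c * (a * cis u + b * cnj (cis u))"
    by (simp add: algebra_simps)
  also have "\<dots> = of_real (c * r) * cis (F u)" unfolding r(2) by simp
  finally have "herm (mat2 a b (cnj b) (cnj a) *v vec2 (of_real c * cis u) (cnj (of_real c * cis u)))
      (vec2 (of_real c * cis w) (cnj (of_real c * cis w)))
      = of_real (c * r) * cis (F u) * cnj (of_real c * cis w) + cnj (of_real (c * r) * cis (F u)) * (of_real c * cis w)"
    unfolding mat2_conj_vec2 herm_vec2 by simp
  also have "\<dots> = of_real (2 * c * c * r * cos (F u - w))"
    by (simp add: complex_eq_iff cis_cnj cos_diff sin_diff algebra_simps)
  finally show ?thesis using c r(1) by simp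
qed

lemma prodT_at_0: "prodT al l 0 j = prodT al l' 0 j"
  by (induction j) (simp_all add: matB_0)

lemma matU_at_0: "matU n al l e 0 = matU n al l' e 0"
proof -
  have "prodW n al l 0 e k = prodW n al l' 0 e k" for k by (induction k) (simp_all add: matB_0)
  then show ?thesis unfolding matU_def by (simp add: matB_0)
qed

lemma qe_mult_at_0: "qe_mult n al l 0 = qe_mult n al l' 0"
proof -
  have "matT n al l 0 = matT n al l' 0" unfolding matT_def by (rule prodT_at_0)
  moreover have "exc_cond n al l e 0 = exc_cond n al l' e 0" for e
    unfolding exc_cond_def using matU_at_0 by metis
  ultimately show ?thesis unfolding qe_mult_def by simp
qed

lemma qe_count_neg: "s < 0 \<Longrightarrow> qe_count n al l s = 0"
  unfolding qe_count_def by (auto intro: sum.neutral)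

lemma liftU_at_0: "liftU n al l e 0 x = liftU n al l' e 0 x"
  unfolding liftU_def using liftW_at_0 by simp

locale curvilinear_polygon =
  fixes n :: nat and al l :: "nat \<Rightarrow> real"
  assumes n_ge_1: "n \<ge> 1"
    and angle_range: "\<And>j. j \<in> {1..n} \<Longrightarrow> 0 < al j \<and> al j < pi"
    and side_pos: "\<And>j. j \<in> {1..n} \<Longrightarrow> 0 < l j"
begin

lemma regular_angle_if_not_exceptional:
  "j \<in> {1..n} \<Longrightarrow> \<not> exceptional (al j) \<Longrightarrow> regular_angle (al j)"
  using regular_angle_iff_not_exceptional angle_range by blast

lemma regular_before_exceptional:
  assumes e: "e \<in> exc_vertices n al"
  shows "\<forall>i\<in>{1..prev_dist n al e - 1}. regular_angle (al (back_index n e i)) \<and> l (back_index n e i) > 0"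
proof
  fix i assume i: "i \<in> {1..prev_dist n al e - 1}"
  have j: "back_index n e i \<in> {1..n}" unfolding back_index_def by (rule cyc_in_range[OF n_ge_1])
  have "\<not> exceptional (al (back_index n e i))"
    unfolding back_index_def using prev_dist_bounds[OF n_ge_1 e] i by auto
  then show "regular_angle (al (back_index n e i)) \<and> l (back_index n e i) > 0"
    using regular_angle_if_not_exceptional side_pos j by blast
qed

lemma strict_lift_family_liftU:
  assumes e: "e \<in> exc_vertices n al"
  shows "strict_lift_family (liftU n al l e)"
proof -
  have le: "l e > 0" using e side_pos unfolding exc_vertices_def by auto
  have "strict_lift_family (\<lambda>s x. (\<lambda>s x. x + l e * s) s
      (liftW al l (back_index n e) (prev_dist n al e - 1) s x))"
    using strict_lift_family_comp_left[OF strict_lift_family_shift[OF le]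
        lift_family_liftW[where ix = "back_index n e", OF regular_before_exceptional[OF e]]] .
  then show ?thesis unfolding liftU_def[abs_def] by simp
qed

lemma matU_angle_lift:
  assumes e: "e \<in> exc_vertices n al"
  shows "angle_lift (matU n al l e s) (liftU n al l e s) \<and> su11 (matU n al l e s)"
proof -
  have W: "angle_lift (prodW n al l s e (prev_dist n al e - 1)) (liftW al l (back_index n e) (prev_dist n al e - 1) s)
      \<and> su11 (prodW n al l s e (prev_dist n al e - 1))"
    using regular_before_exceptional[OF e] by (intro prodW_angle_lift) (auto simp: back_index_def)
  have "angle_lift (matB (l e) s ** prodW n al l s e (prev_dist n al e - 1))
      ((\<lambda>x. x + l e * s) \<circ> liftW al l (back_index n e) (prev_dist n al e - 1) s)"
    using angle_lift_mult[OF angle_lift_matB W[THEN conjunct1]] .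
  then have "angle_lift (matU n al l e s) (liftU n al l e s)"
    unfolding matU_def by (rule angle_lift_cong) (simp add: liftU_def)
  moreover have "su11 (matU n al l e s)" unfolding matU_def using su11_mult su11_matB W by blast
  ultimately show ?thesis ..
qed

lemma exc_cond_iff_level:
  assumes e: "e \<in> exc_vertices n al"
  shows "exc_cond n al l e s \<longleftrightarrow>
     (\<exists>k::int. liftU n al l e s (phase (al (prev_exc n al e))) = (phase (al e) + pi/2) + pi * of_int k)"
proof -
  obtain a b where ab: "matU n al l e s = mat2 a b (cnj b) (cnj a)"
    using matU_angle_lift[OF e, of s] unfolding su11_def by blast
  have F: "angle_lift (mat2 a b (cnj b) (cnj a)) (liftU n al l e s)"
    using matU_angle_lift[OF e, of s] ab by simp
  have "exc_cond n al l e s \<longleftrightarrow> cos (liftU n al l e s (phase (al (prev_exc n al e))) - phase (al e)) = 0"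
    unfolding exc_cond_def ab Xvec_eq_phase by (rule herm_su11_eq_0_iff[OF F]) simp
  also have "\<dots> \<longleftrightarrow> (\<exists>k::int. liftU n al l e s (phase (al (prev_exc n al e))) - phase (al e) = of_int k * pi + pi/2)"
    by (rule cos_zero_iff_int2)
  finally show ?thesis by (auto simp: algebra_simps)
qed

lemma qe_count_regular:
  assumes E: "exc_vertices n al = {}" and s: "s \<ge> 0"
  shows "qe_count n al l s = qe_mult n al l 0
     + crossings (min_disp (liftT al l n)) 0 (2*pi) s + crossings (max_disp (liftT al l n)) 0 (2*pi) s"
proof -
  define F where "F = liftT al l n"
  define g where "g e = (if e then max_disp F else min_disp F)" for e
  have reg: "\<forall>i\<in>{1..n}. regular_angle (al i) \<and> l i > 0"
    using E regular_angle_if_not_exceptional side_pos unfolding exc_vertices_def by blast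
  have F: "strict_lift_family F" unfolding F_def by (rule strict_lift_family_liftT[OF reg n_ge_1])
  have mult: "qe_mult n al l t = card {e. \<exists>k::int. g e t = 2*pi * of_int k}" if "t > 0" for t
  proof -
    have "angle_lift (prodT al l t n) (liftT al l n t) \<and> su11 (prodT al l t n)"
      using prodT_angle_lift reg by blast
    then have "geom_mult1 (matT n al l t)
        = of_bool (\<exists>k::int. g False t = 2*pi * of_int k) + of_bool (\<exists>k::int. g True t = 2*pi * of_int k)"
      unfolding matT_def g_def F_def
      using geom_mult1_via_extreme_disp[OF _ _ strict_lift_family_lift_family[OF F[unfolded F_def]]] by simp
    moreover have "card {e::bool. Q e} = of_bool (Q False) + of_bool (Q True)" for Q
    proof -
      have "card {e::bool. Q e} = (\<Sum>e\<in>UNIV. of_bool (Q e))" by (simp add: sum_of_bool_eq)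
      then show ?thesis by (simp add: UNIV_bool)
    qed
    ultimately show ?thesis using that E unfolding qe_mult_def by auto
  qed
  have "qe_count n al l s = qe_mult n al l 0 + (\<Sum>e\<in>UNIV. crossings (g e) 0 (2*pi) s)"
    unfolding qe_count_def
  proof (rule sum_multiplicities_eq_crossings[where P = "\<lambda>e t. \<exists>k::int. g e t = 2*pi * of_int k"])
    show "g e t < g e t'" if "t < t'" for e t t'
      unfolding g_def using min_disp_strict_mono[OF F that] max_disp_strict_mono[OF F that] by simp
    show "continuous_on UNIV (g e)" for e
      unfolding g_def using min_disp_continuous max_disp_continuous strict_lift_family_lift_family[OF F] by simp
  qed (use s mult in auto)
  then show ?thesis by (simp add: UNIV_bool g_def F_def)
qed

lemma qe_count_exceptional:
  assumes E: "exc_vertices n al \<noteq> {}" and s: "s \<ge> 0"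
  shows "qe_count n al l s = qe_mult n al l 0 + (\<Sum>e\<in>exc_vertices n al.
     crossings (\<lambda>t. liftU n al l e t (phase (al (prev_exc n al e)))) (phase (al e) + pi/2) pi s)"
  unfolding qe_count_def
proof (rule sum_multiplicities_eq_crossings[where P = "exc_cond n al l"])
  fix e assume e: "e \<in> exc_vertices n al"
  show "liftU n al l e t (phase (al (prev_exc n al e))) < liftU n al l e t' (phase (al (prev_exc n al e)))"
    if "t < t'" for t t'
    using strict_lift_family_strict_mono_param[OF strict_lift_family_liftU[OF e] that] .
  show "continuous_on UNIV (\<lambda>t. liftU n al l e t (phase (al (prev_exc n al e))))"
    by (rule lift_family_continuous_param[OF strict_lift_family_lift_family[OF strict_lift_family_liftU[OF e]]])
  show "exc_cond n al l e t \<longleftrightarrow>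
      (\<exists>k::int. liftU n al l e t (phase (al (prev_exc n al e))) = (phase (al e) + pi/2) + pi * of_int k)" for t
    by (rule exc_cond_iff_level[OF e])
next
  show "qe_mult n al l t = card {e \<in> exc_vertices n al. exc_cond n al l e t}" if "t > 0" for t
    using that E unfolding qe_mult_def by simp
qed (use s in \<open>auto simp: exc_vertices_def\<close>)

lemma liftU_mono_lengths:
  assumes e: "e \<in> exc_vertices n al" and le: "\<And>j. j \<in> {1..n} \<Longrightarrow> l j \<le> l' j" and s: "s \<ge> 0"
  shows "liftU n al l e s x \<le> liftU n al l' e s x"
proof -
  have "l e * s \<le> l' e * s" using e le s unfolding exc_vertices_def by (simp add: mult_right_mono)
  moreover have "\<forall>i\<in>{1..prev_dist n al e - 1}. l (back_index n e i) \<le> l' (back_index n e i)"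
    using le cyc_in_range[OF n_ge_1] unfolding back_index_def by blast
  then have "liftW al l (back_index n e) (prev_dist n al e - 1) s x
      \<le> liftW al l' (back_index n e) (prev_dist n al e - 1) s x"
    using liftW_mono_lengths regular_before_exceptional[OF e] s by blast
  ultimately show ?thesis unfolding liftU_def by simp
qed

lemma qe_count_mono_lengths:
  assumes le: "\<And>j. j \<in> {1..n} \<Longrightarrow> l j \<le> l' j"
  shows "qe_count n al l s \<le> qe_count n al l' s"
proof -
  interpret longer: curvilinear_polygon n al l'
    using n_ge_1 angle_range side_pos le by unfold_locales force+
  consider "s < 0" | "s \<ge> 0" "exc_vertices n al = {}" | "s \<ge> 0" "exc_vertices n al \<noteq> {}" by linarith
  then show ?thesis
  proof cases
    case 1
    then show ?thesis using qe_count_neg by simp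
  next
    case 2
    have reg: "\<forall>i\<in>{1..n}. regular_angle (al i)"
      using 2 regular_angle_if_not_exceptional unfolding exc_vertices_def by blast
    have F: "lift_family (liftT al l n)" "lift_family (liftT al l' n)"
      using strict_lift_family_liftT[OF _ n_ge_1] reg side_pos longer.side_pos
      by (auto intro!: strict_lift_family_lift_family)
    have at_0: "min_disp (liftT al l n) 0 = min_disp (liftT al l' n) 0"
      "max_disp (liftT al l n) 0 = max_disp (liftT al l' n) 0"
      by (rule min_disp_cong max_disp_cong, rule liftT_at_0)+
    have longer_s: "liftT al l n s x \<le> liftT al l' n s x" for x using liftT_mono_lengths reg le 2 by blast
    have "min_disp (liftT al l n) s \<le> min_disp (liftT al l' n) s"
      "max_disp (liftT al l n) s \<le> max_disp (liftT al l' n) s"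
      by (rule min_disp_mono_family[OF F longer_s] max_disp_mono_family[OF F longer_s])+
    then show ?thesis
      unfolding qe_count_regular[OF 2(2,1)] longer.qe_count_regular[OF 2(2,1)] qe_mult_at_0[of n al l l']
      using at_0 by (intro add_mono order_refl crossings_mono) auto
  next
    case 3
    then show ?thesis
      unfolding qe_count_exceptional[OF 3(2,1)] longer.qe_count_exceptional[OF 3(2,1)] qe_mult_at_0[of n al l l']
      using liftU_mono_lengths[OF _ le 3(1)]
      by (intro add_mono order_refl sum_mono crossings_mono) (auto simp: liftU_at_0[of n al l _ _ l'])
  qed
qed

lemma qe_count_unbounded: "\<exists>s. m \<le> qe_count n al l s"
proof (cases "exc_vertices n al = {}")
  case True
  have reg: "\<forall>i\<in>{1..n}. regular_angle (al i) \<and> l i > 0"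
    using True regular_angle_if_not_exceptional side_pos unfolding exc_vertices_def by blast
  have F: "lift_family (liftT al l n)"
    by (rule strict_lift_family_lift_family[OF strict_lift_family_liftT[OF reg n_ge_1]])
  have L: "(\<Sum>i=1..n. l i) > 0" using side_pos n_ge_1 by (intro sum_pos) auto
  have "(\<Sum>i=1..n. l i) * s - real n * pi / 2 \<le> min_disp (liftT al l n) s" if "s \<ge> 0" for s
    using liftT_lower_bound[OF that] by (intro min_disp_lower_bound[OF F]) (simp add: algebra_simps)
  moreover have "2*pi > (0::real)" by simp
  ultimately obtain s where "s \<ge> 0" "m \<le> crossings (min_disp (liftT al l n)) 0 (2*pi) s"
    using crossings_unbounded[OF L] by blast
  then show ?thesis using qe_count_regular[OF True] by (intro exI[of _ s]) simp
next
  case False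
  then obtain e where e: "e \<in> exc_vertices n al" by blast
  define x0 where "x0 = phase (al (prev_exc n al e))"
  define c where "c = phase (al e) + pi/2"
  define N where "N e' s = crossings (\<lambda>t. liftU n al l e' t (phase (al (prev_exc n al e')))) (phase (al e') + pi/2) pi s"
    for e' s
  have L: "l e > 0" using e side_pos unfolding exc_vertices_def by auto
  have lower: "l e * s - (real (prev_dist n al e - 1) * pi / 2 - x0) \<le> liftU n al l e s x0" if "s \<ge> 0" for s
  proof -
    have "x0 - real (prev_dist n al e - 1) * pi / 2 \<le> liftW al l (back_index n e) (prev_dist n al e - 1) s x0"
      by (rule liftW_lower_bound[where ix = "back_index n e", OF regular_before_exceptional[OF e] that])
    then show ?thesis unfolding liftU_def by simp
  qed
  have "\<exists>s\<ge>0. m \<le> crossings (\<lambda>t. liftU n al l e t x0) c pi s"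
    by (rule crossings_unbounded[OF L pi_gt_zero lower])
  then obtain s where s: "s \<ge> 0" "m \<le> N e s" unfolding N_def x0_def c_def by blast
  have "N e s \<le> (\<Sum>e'\<in>exc_vertices n al. N e' s)"
    by (rule member_le_sum[OF e]) (simp_all add: exc_vertices_def)
  also have "\<dots> \<le> qe_count n al l s" unfolding qe_count_exceptional[OF False s(1)] N_def by simp
  finally show ?thesis using s(2) by (intro exI[of _ s]) simp
qed

end

lemma Inf_level_set_antimono:
  fixes N N' :: "real \<Rightarrow> nat"
  assumes "\<And>s. N s \<le> N' s" "\<And>s. s < 0 \<Longrightarrow> N' s = 0" "m \<ge> 1" "\<exists>s. m \<le> N s"
  shows "Inf {s. m \<le> N' s} \<le> Inf {s. m \<le> N s}"
proof (rule cInf_superset_mono)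
  show "{s. m \<le> N s} \<noteq> {}" using assms(4) by blast
  show "bdd_below {s. m \<le> N' s}"
  proof (rule bdd_belowI)
    fix s assume "s \<in> {s. m \<le> N' s}"
    then show "0 \<le> s" using assms(2)[of s] assms(3) by (cases "s < 0") auto
  qed
  show "{s. m \<le> N s} \<subseteq> {s. m \<le> N' s}" using assms(1) order_trans by blast
qed

theorem corollary5p32:
  fixes n :: nat and alpha l l' :: "nat \<Rightarrow> real"
  assumes "n \<ge> 1"
    and "\<And>j. j \<in> {1..n} \<Longrightarrow> 0 < alpha j \<and> alpha j < pi"
    and "\<And>j. j \<in> {1..n} \<Longrightarrow> 0 < l j"
    and "\<And>j. j \<in> {1..n} \<Longrightarrow> l j \<le> l' j"
  shows "\<forall>m \<ge> 1. qe n alpha l m \<ge> qe n alpha l' m"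
proof (intro allI impI)
  fix m :: nat assume "m \<ge> 1"
  interpret curvilinear_polygon n alpha l using assms(1-3) by unfold_locales
  have "qe_count n alpha l s \<le> qe_count n alpha l' s" for s by (rule qe_count_mono_lengths[OF assms(4)])
  then show "qe n alpha l' m \<le> qe n alpha l m"
    unfolding qe_def by (rule Inf_level_set_antimono[OF _ qe_count_neg \<open>m \<ge> 1\<close> qe_count_unbounded])
qed

end
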